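(* Let $R$ be the ring of integers of a nonarchimedean local field $F$ of characteristic not $2$ in which $2$ is a prime element, and assume $R\ne\mathbb{Z}_2$. For any $n\ge 3$, the $R$-lattice $\mathbb{H}^{n-1}\perp\langle 1,-1\rangle$ is primitively $n$-universal. In particular, $u^\ast_R(n) = 2n$ for any $n\ge 3$.
   Context: An $R$-lattice is a finitely generated $R$-submodule of a quadratic space $(V,B)$ over $F$, assumed integral ($B(L,L)\subseteq R$) and nondegenerate. A representation is an $R$-linear map preserving $B$; it is primitive if its image is a direct summand. A lattice is primitively $n$-universal if it primitively represents every $R$-lattice of rank $n$; $u^\ast_R(n)$ is the minimal rank of such a lattice. $\mathbb{H}$ is the binary lattice with Gram matrix $\begin{pmatrix}0&1\\1&0\end{pmatrix}$, $\mathbb{H}^{k}$ the orthogonal sum of $k$ copies, and $\langle a_1,\dots,a_k\rangle$ the lattice with diagonal Gram matrix $\operatorname{diag}(a_1,\dots,a_k)$. *)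

theory Defs
  imports "Jordan_Normal_Form.Determinant"
begin

text \<open>v is a normalized discrete valuation on the field; its value at 0 is irrelevant
 (conventionally infinity) and is never used.\<close>

definition discrete_valuation :: "('a::field \<Rightarrow> int) \<Rightarrow> bool" where
  "discrete_valuation v \<longleftrightarrow>
     (\<forall>x y. x \<noteq> 0 \<longrightarrow> y \<noteq> 0 \<longrightarrow> v (x * y) = v x + v y) \<and>
     (\<forall>x y. x \<noteq> 0 \<longrightarrow> y \<noteq> 0 \<longrightarrow> x + y \<noteq> 0 \<longrightarrow> min (v x) (v y) \<le> v (x + y)) \<and>
     (\<exists>p. p \<noteq> 0 \<and> v p = 1)"

definition vsmall :: "('a::field \<Rightarrow> int) \<Rightarrow> 'a \<Rightarrow> int \<Rightarrow> bool" where
  "vsmall v x k \<longleftrightarrow> x = 0 \<or> k \<le> v x"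

definition v_complete :: "('a::field \<Rightarrow> int) \<Rightarrow> bool" where
  "v_complete v \<longleftrightarrow>
     (\<forall>s :: nat \<Rightarrow> 'a.
        (\<forall>k. \<exists>N. \<forall>m\<ge>N. \<forall>n\<ge>N. vsmall v (s m - s n) k) \<longrightarrow>
        (\<exists>L. \<forall>k. \<exists>N. \<forall>n\<ge>N. vsmall v (s n - L) k))"

definition int_ring :: "('a::field \<Rightarrow> int) \<Rightarrow> 'a set" where
  "int_ring v = {x. x = 0 \<or> 0 \<le> v x}"

definition finite_residue_field :: "('a::field \<Rightarrow> int) \<Rightarrow> bool" where
  "finite_residue_field v \<longleftrightarrow>
     (\<exists>S. finite S \<and> S \<subseteq> int_ring v \<and> (\<forall>x\<in>int_ring v. \<exists>s\<in>S. vsmall v (x - s) 1))"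

definition nonarch_local_field :: "('a::field \<Rightarrow> int) \<Rightarrow> bool" where
  "nonarch_local_field v \<longleftrightarrow> discrete_valuation v \<and> v_complete v \<and> finite_residue_field v"

definition prime_elem_in :: "'a::field set \<Rightarrow> 'a \<Rightarrow> bool" where
  "prime_elem_in R p \<longleftrightarrow> p \<in> R \<and> p \<noteq> 0 \<and> \<not> (\<exists>u\<in>R. p * u = 1) \<and>
     (\<forall>a\<in>R. \<forall>b\<in>R. (\<exists>c\<in>R. a * b = p * c) \<longrightarrow> (\<exists>c\<in>R. a = p * c) \<or> (\<exists>c\<in>R. b = p * c))"

definition Z2 :: "(nat \<Rightarrow> int) set" where
  "Z2 = {a. \<forall>k. 0 \<le> a k \<and> a k < 2 ^ k \<and> a (Suc k) mod 2 ^ k = a k}"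

definition Z2_add :: "(nat \<Rightarrow> int) \<Rightarrow> (nat \<Rightarrow> int) \<Rightarrow> (nat \<Rightarrow> int)" where
  "Z2_add a b = (\<lambda>k. (a k + b k) mod 2 ^ k)"

definition Z2_mul :: "(nat \<Rightarrow> int) \<Rightarrow> (nat \<Rightarrow> int) \<Rightarrow> (nat \<Rightarrow> int)" where
  "Z2_mul a b = (\<lambda>k. (a k * b k) mod 2 ^ k)"

definition ring_iso_Z2 :: "'a::field set \<Rightarrow> bool" where
  "ring_iso_Z2 R \<longleftrightarrow> (\<exists>\<phi>. bij_betw \<phi> R Z2 \<and>
      (\<forall>x\<in>R. \<forall>y\<in>R. \<phi> (x + y) = Z2_add (\<phi> x) (\<phi> y) \<and> \<phi> (x * y) = Z2_mul (\<phi> x) (\<phi> y)))"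

definition mat_over :: "'a set \<Rightarrow> 'a mat \<Rightarrow> bool" where
  "mat_over R A \<longleftrightarrow> (\<forall>i<dim_row A. \<forall>j<dim_col A. A $$ (i, j) \<in> R)"

text \<open>Gram matrix (w.r.t. an R-basis) of an integral nondegenerate R-lattice of rank n.\<close>
definition lattice_gram :: "'a::field set \<Rightarrow> nat \<Rightarrow> 'a mat \<Rightarrow> bool" where
  "lattice_gram R n G \<longleftrightarrow> G \<in> carrier_mat n n \<and> transpose_mat G = G \<and> mat_over R G \<and> det G \<noteq> 0"

text \<open>X (columns = images of the basis of L in the basis of M) is a representation of the
 lattice with Gram matrix G by the lattice with Gram matrix H.\<close>
definition represents :: "'a::field set \<Rightarrow> 'a mat \<Rightarrow> 'a mat \<Rightarrow> 'a mat \<Rightarrow> bool" where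
  "represents R H G X \<longleftrightarrow> X \<in> carrier_mat (dim_row H) (dim_row G) \<and> mat_over R X \<and>
     transpose_mat X * H * X = G"

definition join_cols :: "'a mat \<Rightarrow> 'a mat \<Rightarrow> 'a mat" where
  "join_cols X Y = mat (dim_row X) (dim_col X + dim_col Y)
     (\<lambda>(i, j). if j < dim_col X then X $$ (i, j) else Y $$ (i, j - dim_col X))"

text \<open>Primitive: the image is a direct summand, i.e. the columns of X extend to an R-basis.\<close>
definition prim_represents :: "'a::field set \<Rightarrow> 'a mat \<Rightarrow> 'a mat \<Rightarrow> 'a mat \<Rightarrow> bool" where
  "prim_represents R H G X \<longleftrightarrow> represents R H G X \<and>
     (\<exists>Y. Y \<in> carrier_mat (dim_row H) (dim_row H - dim_row G) \<and> mat_over R Y \<and>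
          (\<exists>u\<in>R. det (join_cols X Y) * u = 1))"

definition prim_n_universal :: "'a::field set \<Rightarrow> nat \<Rightarrow> 'a mat \<Rightarrow> bool" where
  "prim_n_universal R n H \<longleftrightarrow> lattice_gram R (dim_row H) H \<and>
     (\<forall>G. lattice_gram R n G \<longrightarrow> (\<exists>X. prim_represents R H G X))"

definition u_star :: "'a::field set \<Rightarrow> nat \<Rightarrow> nat" where
  "u_star R n = (LEAST m. \<exists>H. H \<in> carrier_mat m m \<and> prim_n_universal R n H)"

definition orth_sum :: "'a::zero mat \<Rightarrow> 'a mat \<Rightarrow> 'a mat" where
  "orth_sum A B = four_block_mat A (0\<^sub>m (dim_row A) (dim_col B)) (0\<^sub>m (dim_row B) (dim_col A)) B"

definition hyp_plane :: "'a::{zero,one} mat" where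
  "hyp_plane = mat_of_rows_list 2 [[0, 1], [1, 0]]"

definition hyp_pow :: "nat \<Rightarrow> 'a::{zero,one} mat" where
  "hyp_pow k = ((orth_sum hyp_plane) ^^ k) (0\<^sub>m 0 0)"

definition diag_lattice :: "'a::zero list \<Rightarrow> 'a mat" where
  "diag_lattice xs = mat (length xs) (length xs) (\<lambda>(i, j). if i = j then xs ! i else 0)"

end

theory Submission
  imports Defs
begin

text \<open>Upper bound: after a change of basis of a Gram matrix \<open>G\<close> of rank \<open>n = l + 1 \<ge> 3\<close>,
  some diagonal entry is a unit or divisible by \<open>4\<close> (otherwise an off-diagonal entry can be
  used to reach this), hence of the form \<open>x\<^sup>2 - y\<^sup>2\<close> with \<open>x\<close> or \<open>y\<close> a unit; this is where a
  residue field larger than \<open>\<bbbF>\<^sub>2\<close>, i.e. \<open>R \<noteq> \<int>\<^sub>2\<close>, is needed. Moving that vector to the last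
  position, it is sent to \<open>x e\<^sub>2\<^sub>l + y e\<^sub>2\<^sub>l\<^sub>+\<^sub>1\<close> in \<open>\<langle>1, -1\<rangle>\<close>, the others to \<open>e\<^sub>2\<^sub>a + r\<^sub>a e\<^sub>2\<^sub>l\<close> with
  \<open>r\<^sub>a\<^sup>2 \<equiv> G a a (mod 2)\<close> (squaring is onto the finite residue field), and the remaining
  discrepancy is absorbed by the partners \<open>e\<^sub>2\<^sub>a\<^sub>+\<^sub>1\<close>; the unit \<open>x\<close> or \<open>y\<close> makes the image
  a direct summand.

  Lower bound: a lattice \<open>H\<close> of rank \<open>m < 2 n\<close> cannot primitively represent
  \<open>2 det H \<cdot> I\<^sub>n\<close>, since after extending to a unimodular basis every term of the Leibniz
  expansion of the new Gram determinant meets the \<open>n \<times> n\<close> block \<open>2 det H \<cdot> I\<^sub>n\<close>, so that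
  \<open>2 det H\<close> would divide \<open>det H\<close>.\<close>

section \<open>Dyadic valuation rings\<close>

locale valued_field =
  fixes v :: "'a::field \<Rightarrow> int"
  assumes discrete_valuation: "discrete_valuation v"
begin

abbreviation R where "R \<equiv> int_ring v"

lemma v_mult: "x \<noteq> 0 \<Longrightarrow> y \<noteq> 0 \<Longrightarrow> v (x * y) = v x + v y"
  using discrete_valuation unfolding discrete_valuation_def by blast

lemma v_add: "x \<noteq> 0 \<Longrightarrow> y \<noteq> 0 \<Longrightarrow> x + y \<noteq> 0 \<Longrightarrow> min (v x) (v y) \<le> v (x + y)"
  using discrete_valuation unfolding discrete_valuation_def by blast

lemma v_one [simp]: "v 1 = 0"
  using v_mult[of 1 1] by simp

lemma v_minus_one [simp]: "v (-1) = 0"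
  using v_mult[of "-1" "-1"] by simp

lemma v_uminus [simp]: "x \<noteq> 0 \<Longrightarrow> v (- x) = v x"
  using v_mult[of "-1" x] by simp

lemma v_inverse: "x \<noteq> 0 \<Longrightarrow> v (inverse x) = - v x"
  using v_mult[of x "inverse x"] by simp

lemma v_divide: "x \<noteq> 0 \<Longrightarrow> y \<noteq> 0 \<Longrightarrow> v (x / y) = v x - v y"
  by (simp add: divide_inverse v_mult v_inverse)

lemma int_ring_iff: "x \<in> R \<longleftrightarrow> x = 0 \<or> 0 \<le> v x"
  unfolding int_ring_def by simp

lemma int_ring_zero [simp]: "0 \<in> R" and int_ring_one [simp]: "1 \<in> R"
  by (auto simp: int_ring_iff)

lemma int_ring_mult [simp, intro]: "x \<in> R \<Longrightarrow> y \<in> R \<Longrightarrow> x * y \<in> R"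
  by (cases "x = 0 \<or> y = 0") (auto simp: int_ring_iff v_mult)

lemma int_ring_add [simp, intro]: "x \<in> R \<Longrightarrow> y \<in> R \<Longrightarrow> x + y \<in> R"
  using v_add[of x y] by (cases "x = 0 \<or> y = 0 \<or> x + y = 0") (auto simp: int_ring_iff)

lemma int_ring_uminus_iff [simp]: "- x \<in> R \<longleftrightarrow> x \<in> R"
  by (cases "x = 0") (auto simp: int_ring_iff)

lemma int_ring_diff [simp, intro]: "x \<in> R \<Longrightarrow> y \<in> R \<Longrightarrow> x - y \<in> R"
  using int_ring_add[of x "- y"] by simp

lemma int_ring_power [simp, intro]: "x \<in> R \<Longrightarrow> x ^ k \<in> R"
  by (induct k) auto

lemma int_ring_of_nat [simp]: "of_nat k \<in> R"
  by (induct k) auto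

lemma int_ring_of_int [simp]: "of_int k \<in> R"
  by (cases k) auto

lemma int_ring_sum: "(\<And>x. x \<in> S \<Longrightarrow> f x \<in> R) \<Longrightarrow> sum f S \<in> R"
  by (induct S rule: infinite_finite_induct) auto

lemma int_ring_prod: "(\<And>x. x \<in> S \<Longrightarrow> f x \<in> R) \<Longrightarrow> prod f S \<in> R"
  by (induct S rule: infinite_finite_induct) auto

lemma int_ring_signof [simp]: "signof \<sigma> \<in> R"
  by (simp add: sign_def)

end

text \<open>In the valuation ring \<open>R\<close>, divisibility by \<open>2\<close> is expressed as \<open>x / 2 \<in> R\<close>;
  an \<open>x \<in> R\<close> with \<open>x / 2 \<notin> R\<close> is a unit.\<close>

locale dyadic_valued_field = valued_field +
  assumes two_nonzero [simp]: "(2::'a) \<noteq> 0"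
    and two_prime: "prime_elem_in R 2"
begin

lemma four_nonzero [simp]: "(4::'a) \<noteq> 0"
  using mult_eq_0_iff[of "2::'a" 2] by simp

lemma int_ring_two [simp]: "2 \<in> R"
  using two_prime unfolding prime_elem_in_def by blast

lemma v_two [simp]: "v 2 = 1"
proof -
  obtain p :: 'a where p: "p \<noteq> 0" "v p = 1"
    using discrete_valuation unfolding discrete_valuation_def by blast
  have "v 2 \<ge> 1"
  proof (rule ccontr)
    assume "\<not> v 2 \<ge> 1"
    then have "1 / 2 \<in> R" using v_divide[of 1 2] by (simp add: int_ring_iff)
    moreover have "2 * (1 / 2) = (1::'a)" by simp
    ultimately show False using two_prime unfolding prime_elem_in_def by blast
  qed
  then have "2 / p \<in> R" "p \<in> R" using p by (simp_all add: int_ring_iff v_divide)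
  moreover have "p * (2 / p) = 2 * 1" using p by simp
  ultimately obtain c where c: "c \<in> R" "p = 2 * c \<or> 2 / p = 2 * c"
    using two_prime unfolding prime_elem_in_def by (metis int_ring_one)
  then consider "p = 2 * c" "c \<noteq> 0" | "c = 1 / p"
    using p by (auto simp: field_simps)
  then show ?thesis
    using c p \<open>v 2 \<ge> 1\<close> by cases (auto simp: int_ring_iff v_mult v_divide)
qed

lemma v_two_power [simp]: "v (2 ^ k) = int k"
  by (induct k) (auto simp: v_mult)

lemma divide_two_power_in_int_ring_iff: "x / 2 ^ k \<in> R \<longleftrightarrow> x = 0 \<or> int k \<le> v x"
  by (cases "x = 0") (auto simp: int_ring_iff v_divide)

lemma divide_two_in_int_ring_iff: "x / 2 \<in> R \<longleftrightarrow> x = 0 \<or> 1 \<le> v x"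
  using divide_two_power_in_int_ring_iff[of x 1] by simp

lemma half_notin_int_ring: "1 / 2 \<notin> R"
  by (simp add: divide_two_in_int_ring_iff)

lemma unit_inverse_in_int_ring:
  assumes "x \<in> R" "x / 2 \<notin> R"
  shows "inverse x \<in> R" "x \<noteq> 0"
proof -
  show "x \<noteq> 0" using assms by auto
  moreover have "\<not> 1 \<le> v x" using assms(2) by (simp add: divide_two_in_int_ring_iff)
  moreover have "0 \<le> v x" using assms(1) \<open>x \<noteq> 0\<close> by (simp add: int_ring_iff)
  ultimately have "v x = 0" by simp
  then show "inverse x \<in> R" using v_inverse[OF \<open>x \<noteq> 0\<close>] by (simp add: int_ring_iff)
qed

lemma even_mult_cases:
  assumes "x \<in> R" "y \<in> R" "(x * y) / 2 \<in> R"
  shows "x / 2 \<in> R \<or> y / 2 \<in> R"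
  using assms unfolding divide_two_in_int_ring_iff
  by (cases "x = 0 \<or> y = 0") (auto simp: int_ring_iff v_mult)

lemma unit_square: "r \<in> R \<Longrightarrow> r / 2 \<notin> R \<Longrightarrow> r\<^sup>2 / 2 \<notin> R"
  using even_mult_cases[of r r] by (auto simp: power2_eq_square)

end

section \<open>Squares modulo 2\<close>

context dyadic_valued_field
begin

definition residue_class :: "'a \<Rightarrow> 'a set" where
  "residue_class x = {y \<in> R. (x - y) / 2 \<in> R}"

lemma residue_class_eq_iff:
  assumes "x \<in> R" "y \<in> R"
  shows "residue_class x = residue_class y \<longleftrightarrow> (x - y) / 2 \<in> R"
proof
  assume "residue_class x = residue_class y"
  moreover have "y \<in> residue_class y" using assms(2) by (simp add: residue_class_def)
  ultimately have "y \<in> residue_class x" by simp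
  then show "(x - y) / 2 \<in> R" by (simp add: residue_class_def)
next
  assume "(x - y) / 2 \<in> R"
  moreover have "(x - z) / 2 = (x - y) / 2 + (y - z) / 2" "(y - z) / 2 = (x - z) / 2 - (x - y) / 2"
    for z by (simp_all add: field_simps)
  ultimately show "residue_class x = residue_class y"
    unfolding residue_class_def by (metis int_ring_add int_ring_diff)
qed

lemma squares_congruent_iff:
  assumes "x \<in> R" "y \<in> R"
  shows "(x\<^sup>2 - y\<^sup>2) / 2 \<in> R \<longleftrightarrow> (x - y) / 2 \<in> R"
proof
  have "((x - y) * (x - y)) / 2 = (x\<^sup>2 - y\<^sup>2) / 2 - y * (x - y)"
    by (simp add: field_simps power2_eq_square)
  moreover assume "(x\<^sup>2 - y\<^sup>2) / 2 \<in> R"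
  ultimately have "((x - y) * (x - y)) / 2 \<in> R" using assms by (metis int_ring_diff int_ring_mult)
  then show "(x - y) / 2 \<in> R" using even_mult_cases[of "x - y" "x - y"] assms by auto
next
  assume "(x - y) / 2 \<in> R"
  moreover have "(x\<^sup>2 - y\<^sup>2) / 2 = (x - y) / 2 * (x + y)"
    by (simp add: field_simps power2_eq_square)
  ultimately show "(x\<^sup>2 - y\<^sup>2) / 2 \<in> R" using assms by (metis int_ring_add int_ring_mult)
qed

lemma finite_residue_classes:
  assumes "finite_residue_field v"
  shows "finite (residue_class ` R)"
proof -
  obtain S where S: "finite S" "S \<subseteq> R" "\<forall>x\<in>R. \<exists>s\<in>S. vsmall v (x - s) 1"
    using assms unfolding finite_residue_field_def by blast
  have "residue_class ` R \<subseteq> residue_class ` S"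
  proof
    fix C assume "C \<in> residue_class ` R"
    then obtain y where y: "y \<in> R" "C = residue_class y" by auto
    then obtain s where "s \<in> S" "vsmall v (y - s) 1" using S by blast
    then show "C \<in> residue_class ` S"
      using y S residue_class_eq_iff[of y s] by (auto simp: vsmall_def divide_two_in_int_ring_iff)
  qed
  then show ?thesis using S(1) finite_subset by blast
qed

definition square_class :: "'a set \<Rightarrow> 'a set" where
  "square_class C = residue_class ((SOME y. y \<in> C)\<^sup>2)"

lemma square_class_residue_class:
  assumes y: "y \<in> R"
  shows "square_class (residue_class y) = residue_class (y\<^sup>2)"
proof -
  define z where "z = (SOME z. z \<in> residue_class y)"
  have "y \<in> residue_class y" using y by (simp add: residue_class_def)
  then have "z \<in> residue_class y" unfolding z_def by (rule someI)
  then have z: "z \<in> R" "(y - z) / 2 \<in> R" by (auto simp: residue_class_def)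
  moreover have "(z - y) / 2 = - ((y - z) / 2)" by (simp add: field_simps)
  ultimately have "(z - y) / 2 \<in> R" by (metis int_ring_uminus_iff)
  then have "(z\<^sup>2 - y\<^sup>2) / 2 \<in> R" using squares_congruent_iff[OF z(1) y] by blast
  then show ?thesis
    unfolding square_class_def z_def[symmetric] using residue_class_eq_iff[of "z\<^sup>2" "y\<^sup>2"] z(1) y by simp
qed

text \<open>The residue field \<open>R/2R\<close> has characteristic \<open>2\<close>, so squaring is injective on it;
  being finite, it is then also surjective.\<close>

lemma square_root_mod_two:
  assumes finite_residues: "finite_residue_field v" and x: "x \<in> R"
  shows "\<exists>r\<in>R. (x - r\<^sup>2) / 2 \<in> R"
proof -
  let ?K = "residue_class ` R"
  have "inj_on square_class ?K"
  proof (rule inj_onI)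
    fix A B assume "A \<in> ?K" "B \<in> ?K" "square_class A = square_class B"
    then obtain a b where ab: "a \<in> R" "b \<in> R" "A = residue_class a" "B = residue_class b"
      "residue_class (a\<^sup>2) = residue_class (b\<^sup>2)" using square_class_residue_class by auto
    then show "A = B"
      using residue_class_eq_iff[of "a\<^sup>2" "b\<^sup>2"] residue_class_eq_iff[of a b]
      squares_congruent_iff[of a b]
      by simp
  qed
  moreover have "square_class ` ?K \<subseteq> ?K"
    using square_class_residue_class by (auto intro!: imageI)
  ultimately have "square_class ` ?K = ?K"
    by (rule endo_inj_surj[OF finite_residue_classes[OF finite_residues], rotated])
  then have "residue_class x \<in> square_class ` ?K" using x by simp
  then obtain y where y: "y \<in> R" "residue_class x = square_class (residue_class y)" by blast
  then show ?thesis using x square_class_residue_class residue_class_eq_iff[of x "y\<^sup>2"] by auto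
qed

end

section \<open>Valuation rings with residue field \<open>\<bbbF>\<^sub>2\<close>\<close>

lemma Z2_mod_two_power:
  assumes "a \<in> Z2" "k \<le> n"
  shows "a n mod 2 ^ k = a k"
  using assms(2)
proof (induct n rule: dec_induct)
  case base
  then show ?case using assms(1) unfolding Z2_def by auto
next
  case (step n)
  have "a (Suc n) mod 2 ^ k = (a (Suc n) mod 2 ^ n) mod 2 ^ k"
    using step(1) by (simp add: le_imp_power_dvd mod_mod_cancel)
  also have "\<dots> = a n mod 2 ^ k" using assms(1) unfolding Z2_def by auto
  finally show ?case using step by simp
qed

context dyadic_valued_field
begin

lemma two_power_dvd_if_divide_in_int_ring:
  "of_int m / 2 ^ k \<in> R \<Longrightarrow> (2::int) ^ k dvd m"
proof (induct k arbitrary: m)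
  case 0
  then show ?case by simp
next
  case (Suc k)
  have "(of_int m :: 'a) / 2 ^ k = (of_int m / 2 ^ Suc k) * 2" by (simp add: field_simps)
  then have "of_int m / 2 ^ k \<in> R" using Suc.prems by (metis int_ring_mult int_ring_two)
  then have "2 ^ k dvd m" by (rule Suc.hyps)
  then obtain q where q: "m = 2 ^ k * q" by (rule dvdE)
  have "even q"
  proof (rule ccontr)
    assume "odd q"
    then obtain t where "q = 2 * t + 1" by (metis oddE)
    then have "1 / 2 = of_int m / 2 ^ Suc k - (of_int t :: 'a)" unfolding q by (simp add: field_simps)
    then have "1 / 2 \<in> R" using Suc.prems by (metis int_ring_diff int_ring_of_int)
    then show False using half_notin_int_ring by simp
  qed
  then show ?case unfolding q by auto
qed

definition two_adic_rep :: "'a \<Rightarrow> nat \<Rightarrow> int \<Rightarrow> bool" where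
  "two_adic_rep x k a \<longleftrightarrow> 0 \<le> a \<and> a < 2 ^ k \<and> (x - of_int a) / 2 ^ k \<in> R"

definition two_adic_digits :: "'a \<Rightarrow> nat \<Rightarrow> int" where
  "two_adic_digits x k = (THE a. two_adic_rep x k a)"

lemma two_adic_rep_unique:
  assumes "two_adic_rep x k a" "two_adic_rep x k b"
  shows "a = b"
proof -
  have "of_int (a - b) / (2::'a) ^ k = (x - of_int b) / 2 ^ k - (x - of_int a) / 2 ^ k"
    by (simp add: field_simps)
  then have "of_int (a - b) / (2::'a) ^ k \<in> R"
    using assms unfolding two_adic_rep_def by (metis int_ring_diff)
  then have "2 ^ k dvd a - b" by (rule two_power_dvd_if_divide_in_int_ring)
  then obtain q where q: "a - b = 2 ^ k * q" by (rule dvdE)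
  moreover have "\<bar>a - b\<bar> < 2 ^ k" using assms unfolding two_adic_rep_def by auto
  ultimately have "\<bar>q\<bar> < 1" by (simp add: abs_mult)
  then show "a = b" using q by simp
qed

lemma Z2_cauchy:
  assumes a: "a \<in> Z2" and "k \<le> m" "k \<le> n"
  shows "(of_int (a m) - of_int (a n)) / 2 ^ k \<in> R"
proof -
  have "a m mod 2 ^ k = a n mod 2 ^ k" using Z2_mod_two_power[OF a] assms(2,3) by simp
  then obtain q where "a m - a n = 2 ^ k * q" by (metis mod_eq_dvd_iff dvdE)
  then have "(of_int (a m) - of_int (a n)) / 2 ^ k = (of_int q :: 'a)"
    by (simp add: field_simps flip: of_int_diff)
  then show ?thesis by simp
qed

lemma Z2_limit_in_int_ring:
  assumes complete: "v_complete v" and a: "a \<in> Z2"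
  shows "\<exists>L\<in>R. \<forall>k. (L - of_int (a k)) / 2 ^ k \<in> R"
proof -
  define s where "s n = (of_int (a n) :: 'a)" for n
  have "\<forall>k. \<exists>N. \<forall>m\<ge>N. \<forall>n\<ge>N. vsmall v (s m - s n) k"
  proof (intro allI exI impI)
    fix k :: int and m n assume "nat k \<le> m" "nat k \<le> n"
    then have "(s m - s n) / 2 ^ nat k \<in> R" unfolding s_def by (rule Z2_cauchy[OF a])
    then show "vsmall v (s m - s n) k"
      unfolding divide_two_power_in_int_ring_iff vsmall_def by (auto split: if_splits)
  qed
  then obtain L where L: "\<forall>k. \<exists>N. \<forall>n\<ge>N. vsmall v (s n - L) k"
    using complete unfolding v_complete_def by blast
  have "L \<in> R"
  proof -
    obtain N where "vsmall v (s N - L) 0" using L by blast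
    then have "s N - L \<in> R" unfolding vsmall_def int_ring_iff by auto
    then have "s N - (s N - L) \<in> R" unfolding s_def by (metis int_ring_diff int_ring_of_int)
    then show ?thesis by simp
  qed
  moreover have "(L - s k) / 2 ^ k \<in> R" for k
  proof -
    obtain N where N: "\<forall>n\<ge>N. vsmall v (s n - L) (int k)" using L by blast
    define n where "n = max N k"
    have "(s n - L) / 2 ^ k \<in> R"
      using N unfolding n_def vsmall_def divide_two_power_in_int_ring_iff by auto
    moreover have "(s n - s k) / 2 ^ k \<in> R" unfolding s_def n_def by (rule Z2_cauchy[OF a]) simp_all
    moreover have "(L - s k) / 2 ^ k = (s n - s k) / 2 ^ k - (s n - L) / 2 ^ k"
      by (simp add: field_simps)
    ultimately show ?thesis by simp
  qed
  ultimately show ?thesis unfolding s_def by blast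
qed

context
  assumes residues_zero_one: "\<forall>x\<in>R. x / 2 \<in> R \<or> (x - 1) / 2 \<in> R"
begin

lemma two_adic_rep_exists:
  assumes x: "x \<in> R"
  shows "\<exists>a. two_adic_rep x k a"
proof (induct k)
  case 0
  then show ?case using x by (auto simp: two_adic_rep_def intro!: exI[of _ 0])
next
  case (Suc k)
  then obtain a where a: "two_adic_rep x k a" by blast
  define y where "y = (x - of_int a) / 2 ^ k"
  have "y \<in> R" using a by (simp add: two_adic_rep_def y_def)
  then consider "y / 2 \<in> R" | "(y - 1) / 2 \<in> R" using residues_zero_one by blast
  then show ?case
  proof cases
    case 1
    moreover have "(x - of_int a) / 2 ^ Suc k = y / 2" unfolding y_def by (simp add: field_simps)
    ultimately have "(x - of_int a) / 2 ^ Suc k \<in> R" by metis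
    then have "two_adic_rep x (Suc k) a" using a by (simp add: two_adic_rep_def)
    then show ?thesis by blast
  next
    case 2
    moreover have "(x - of_int (a + 2 ^ k)) / 2 ^ Suc k = (y - 1) / 2"
      unfolding y_def by (simp add: field_simps)
    ultimately have "(x - of_int (a + 2 ^ k)) / 2 ^ Suc k \<in> R" by metis
    then have "two_adic_rep x (Suc k) (a + 2 ^ k)" using a by (simp add: two_adic_rep_def)
    then show ?thesis by blast
  qed
qed

lemma two_adic_rep_digits: "x \<in> R \<Longrightarrow> two_adic_rep x k (two_adic_digits x k)"
  unfolding two_adic_digits_def using two_adic_rep_exists two_adic_rep_unique by (metis theI)

lemma two_adic_digits_eqI: "x \<in> R \<Longrightarrow> two_adic_rep x k a \<Longrightarrow> two_adic_digits x k = a"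
  using two_adic_rep_digits two_adic_rep_unique by blast

lemma two_adic_digits_in_Z2:
  assumes x: "x \<in> R"
  shows "two_adic_digits x \<in> Z2"
  unfolding Z2_def
proof (intro CollectI allI conjI)
  fix k
  show "0 \<le> two_adic_digits x k" "two_adic_digits x k < 2 ^ k"
    using two_adic_rep_digits[OF x, of k] by (auto simp: two_adic_rep_def)
  define b where "b = two_adic_digits x (Suc k)"
  have "(x - of_int (b mod 2 ^ k)) / 2 ^ k = ((x - of_int b) / 2 ^ Suc k) * 2 + of_int (b div 2 ^ k)"
    unfolding minus_div_mult_eq_mod[symmetric] by (simp add: field_simps)
  then have "(x - of_int (b mod 2 ^ k)) / 2 ^ k \<in> R"
    using two_adic_rep_digits[OF x, of "Suc k"]
    unfolding two_adic_rep_def b_def by (metis int_ring_mult int_ring_add int_ring_two int_ring_of_int)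
  then have "two_adic_rep x k (b mod 2 ^ k)" by (simp add: two_adic_rep_def)
  then show "two_adic_digits x (Suc k) mod 2 ^ k = two_adic_digits x k"
    using two_adic_digits_eqI[OF x] unfolding b_def by metis
qed

lemma two_adic_digits_add:
  assumes x: "x \<in> R" and y: "y \<in> R"
  shows "two_adic_digits (x + y) = Z2_add (two_adic_digits x) (two_adic_digits y)"
proof
  fix k
  define a b where "a = two_adic_digits x k" and "b = two_adic_digits y k"
  have "(x + y - of_int ((a + b) mod 2 ^ k)) / 2 ^ k
      = (x - of_int a) / 2 ^ k + (y - of_int b) / 2 ^ k + of_int ((a + b) div 2 ^ k)"
    unfolding minus_div_mult_eq_mod[symmetric] by (simp add: field_simps)
  then have "two_adic_rep (x + y) k ((a + b) mod 2 ^ k)"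
    using two_adic_rep_digits[OF x, of k] two_adic_rep_digits[OF y, of k]
    unfolding two_adic_rep_def a_def b_def by (metis int_ring_add int_ring_of_int pos_mod_sign
        pos_mod_bound zero_less_numeral zero_less_power)
  then show "two_adic_digits (x + y) k = Z2_add (two_adic_digits x) (two_adic_digits y) k"
    using two_adic_digits_eqI x y unfolding Z2_add_def a_def b_def by simp
qed

lemma two_adic_digits_mult:
  assumes x: "x \<in> R" and y: "y \<in> R"
  shows "two_adic_digits (x * y) = Z2_mul (two_adic_digits x) (two_adic_digits y)"
proof
  fix k
  define a b where "a = two_adic_digits x k" and "b = two_adic_digits y k"
  have "(x * y - of_int ((a * b) mod 2 ^ k)) / 2 ^ k
      = ((x - of_int a) / 2 ^ k) * y + of_int a * ((y - of_int b) / 2 ^ k) + of_int ((a * b) div 2 ^ k)"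
    unfolding minus_div_mult_eq_mod[symmetric] by (simp add: field_simps)
  then have "two_adic_rep (x * y) k ((a * b) mod 2 ^ k)"
    using two_adic_rep_digits[OF x, of k] two_adic_rep_digits[OF y, of k] y
    unfolding two_adic_rep_def a_def b_def by (metis int_ring_add int_ring_mult int_ring_of_int pos_mod_sign
        pos_mod_bound zero_less_numeral zero_less_power)
  then show "two_adic_digits (x * y) k = Z2_mul (two_adic_digits x) (two_adic_digits y) k"
    using two_adic_digits_eqI x y unfolding Z2_mul_def a_def b_def by simp
qed

lemma two_adic_digits_inj: "inj_on two_adic_digits R"
proof (rule inj_onI)
  fix x y assume x: "x \<in> R" and y: "y \<in> R" and xy: "two_adic_digits x = two_adic_digits y"
  show "x = y"
  proof (rule ccontr)
    assume "x \<noteq> y"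
    define k where "k = nat (v (x - y)) + 1"
    have "(x - y) / 2 ^ k = (x - of_int (two_adic_digits x k)) / 2 ^ k
        - (y - of_int (two_adic_digits y k)) / 2 ^ k"
      using xy by (simp add: field_simps)
    then have "(x - y) / 2 ^ k \<in> R"
      using two_adic_rep_digits[OF x, of k] two_adic_rep_digits[OF y, of k]
      unfolding two_adic_rep_def by (metis int_ring_diff)
    then have "int k \<le> v (x - y)" using \<open>x \<noteq> y\<close> unfolding divide_two_power_in_int_ring_iff by simp
    then show False unfolding k_def by (simp split: if_splits)
  qed
qed

lemma Z2_subset_two_adic_digits_image:
  assumes "v_complete v"
  shows "Z2 \<subseteq> two_adic_digits ` R"
proof
  fix a assume a: "a \<in> Z2"
  then obtain L where L: "L \<in> R" "\<forall>k. (L - of_int (a k)) / 2 ^ k \<in> R"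
    using Z2_limit_in_int_ring[OF assms] by blast
  have "two_adic_rep L k (a k)" for k
    using a L unfolding Z2_def two_adic_rep_def by blast
  then have "two_adic_digits L = a" using two_adic_digits_eqI[OF L(1)] by blast
  then show "a \<in> two_adic_digits ` R" using L(1) by blast
qed

lemma ring_iso_Z2_if_residues_zero_one:
  assumes "v_complete v"
  shows "ring_iso_Z2 R"
proof -
  have "bij_betw two_adic_digits R Z2"
    unfolding bij_betw_def
    using two_adic_digits_inj two_adic_digits_in_Z2 Z2_subset_two_adic_digits_image[OF assms] by blast
  then show ?thesis
    unfolding ring_iso_Z2_def using two_adic_digits_add two_adic_digits_mult by blast
qed

end

lemma exists_unit_not_one_mod_two:
  assumes "v_complete v" "\<not> ring_iso_Z2 R"
  shows "\<exists>c\<in>R. c / 2 \<notin> R \<and> (c - 1) / 2 \<notin> R"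
  using ring_iso_Z2_if_residues_zero_one assms by blast

end

section \<open>Differences of squares\<close>

context dyadic_valued_field
begin

text \<open>From \<open>g \<equiv> r\<^sup>2 (mod 2)\<close>: \<open>x - y = r\<close> and \<open>x + y = g / r\<close>.\<close>

lemma unit_diff_of_squares:
  assumes finite_residues: "finite_residue_field v" and g: "g \<in> R" "g / 2 \<notin> R"
  shows "\<exists>x\<in>R. \<exists>y\<in>R. x\<^sup>2 - y\<^sup>2 = g \<and> (x / 2 \<notin> R \<or> y / 2 \<notin> R)"
proof -
  obtain r where r: "r \<in> R" "(g - r\<^sup>2) / 2 \<in> R"
    using square_root_mod_two[OF finite_residues g(1)] by blast
  have "r / 2 \<notin> R"
  proof
    assume "r / 2 \<in> R"
    then have "r\<^sup>2 / 2 \<in> R" using r(1) by (metis int_ring_mult power2_eq_square times_divide_eq_left)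
    moreover have "g / 2 = (g - r\<^sup>2) / 2 + r\<^sup>2 / 2" by (simp add: field_simps)
    ultimately show False using g(2) r(2) by (metis int_ring_add)
  qed
  then have r_inv: "inverse r \<in> R" "r \<noteq> 0" using unit_inverse_in_int_ring r(1) by blast+
  define x where "x = ((g - r\<^sup>2) / 2 + r\<^sup>2) * inverse r"
  define y where "y = ((g - r\<^sup>2) / 2) * inverse r"
  have "x \<in> R" unfolding x_def using r r_inv by (metis int_ring_add int_ring_mult int_ring_power)
  moreover have "y \<in> R" unfolding y_def using r r_inv by (metis int_ring_mult)
  moreover have "x - y = r" "x + y = g * inverse r"
    unfolding x_def y_def using r_inv by (simp_all add: field_simps power2_eq_square)
  then have "x\<^sup>2 - y\<^sup>2 = g * inverse r * r"
    by (simp add: power2_eq_square square_diff_square_factored)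
  then have "x\<^sup>2 - y\<^sup>2 = g" using r_inv by simp
  moreover have "x / 2 - y / 2 = r / 2" using \<open>x - y = r\<close> by (simp add: diff_divide_distrib)
  then have "x / 2 \<notin> R \<or> y / 2 \<notin> R" using \<open>r / 2 \<notin> R\<close> by (metis int_ring_diff)
  ultimately show ?thesis by blast
qed

text \<open>Take \<open>c = 1\<close> unless \<open>t \<equiv> 1 (mod 2)\<close>, and \<open>c = c\<^sub>0\<close> otherwise, since then
  \<open>t + c\<^sub>0\<^sup>2 \<equiv> (c\<^sub>0 + 1)\<^sup>2 (mod 2)\<close>.\<close>

lemma exists_unit_add_square_unit:
  assumes c0: "c0 \<in> R" "c0 / 2 \<notin> R" "(c0 - 1) / 2 \<notin> R" and t: "t \<in> R"
  shows "\<exists>c\<in>R. c / 2 \<notin> R \<and> (t + c\<^sup>2) / 2 \<notin> R"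
proof (cases "(t - 1) / 2 \<in> R")
  case False
  have "(t + 1) / 2 = (t - 1) / 2 + 1" by (simp add: field_simps)
  then have "(t + 1) / 2 \<notin> R" using False by (metis int_ring_diff int_ring_one add_diff_cancel_right')
  then show ?thesis using half_notin_int_ring by (intro bexI[of _ 1]) simp_all
next
  case True
  have "(t + c0\<^sup>2) / 2 \<notin> R"
  proof
    assume "(t + c0\<^sup>2) / 2 \<in> R"
    moreover have "(1 + c0)\<^sup>2 / 2 = (t + c0\<^sup>2) / 2 - (t - 1) / 2 + c0"
      by (simp add: field_simps power2_eq_square)
    ultimately have "(1 + c0)\<^sup>2 / 2 \<in> R" using True c0(1) by (metis int_ring_add int_ring_diff)
    then have "(1 + c0) / 2 \<in> R" using unit_square[of "1 + c0"] c0(1) by auto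
    moreover have "(c0 - 1) / 2 = (1 + c0) / 2 - 1" by (simp add: field_simps)
    ultimately show False using c0(3) by (metis int_ring_diff int_ring_one)
  qed
  then show ?thesis using c0 by blast
qed

text \<open>For \<open>g = 4 t\<close>: \<open>x = (t + c\<^sup>2) / c\<close> and \<open>y = (t - c\<^sup>2) / c\<close>.\<close>

lemma four_dvd_diff_of_squares:
  assumes c0: "c0 \<in> R" "c0 / 2 \<notin> R" "(c0 - 1) / 2 \<notin> R"
    and g: "g / 4 \<in> R"
  shows "\<exists>x\<in>R. \<exists>y\<in>R. x\<^sup>2 - y\<^sup>2 = g \<and> x / 2 \<notin> R"
proof -
  define t where "t = g / 4"
  have t: "t \<in> R" using g unfolding t_def .
  obtain c where c: "c \<in> R" "c / 2 \<notin> R" "(t + c\<^sup>2) / 2 \<notin> R"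
    using exists_unit_add_square_unit[OF c0 t] by blast
  then have c_inv: "inverse c \<in> R" "c \<noteq> 0" using unit_inverse_in_int_ring by blast+
  define x where "x = (t + c\<^sup>2) * inverse c"
  define y where "y = (t - c\<^sup>2) * inverse c"
  have "x \<in> R" "y \<in> R" unfolding x_def y_def using c t c_inv by simp_all
  moreover have "x\<^sup>2 - y\<^sup>2 = g"
  proof -
    have "x\<^sup>2 - y\<^sup>2 = (x - y) * (x + y)" by (simp add: algebra_simps power2_eq_square)
    also have "\<dots> = (2 * c) * (2 * t * inverse c)"
      unfolding x_def y_def using c_inv by (simp add: field_simps power2_eq_square)
    also have "\<dots> = g" unfolding t_def using c_inv by (simp add: field_simps)
    finally show ?thesis .
  qed
  moreover have "x / 2 \<notin> R"
  proof
    assume "x / 2 \<in> R"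
    moreover have "x / 2 * c = (t + c\<^sup>2) / 2" unfolding x_def using c_inv by (simp add: field_simps)
    ultimately show False using c by (metis int_ring_mult)
  qed
  ultimately show ?thesis by blast
qed

end

section \<open>Congruence of Gram matrices\<close>

lemma index_transpose_mult_mult:
  assumes A: "A \<in> carrier_mat N n" and H: "H \<in> carrier_mat N N" and B: "B \<in> carrier_mat N m"
    and a: "a < n" and b: "b < m"
  shows "(transpose_mat A * H * B) $$ (a, b) = (\<Sum>i<N. \<Sum>j<N. A $$ (i, a) * H $$ (i, j) * B $$ (j, b))"
proof -
  have "(transpose_mat A * H * B) $$ (a, b) = (\<Sum>i<N. A $$ (i, a) * (\<Sum>j<N. H $$ (i, j) * B $$ (j, b)))"
    using A H B a b by (simp add: scalar_prod_def lessThan_atLeast0)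
  then show ?thesis by (simp add: sum_distrib_left mult.assoc)
qed

lemma transpose_mult_congruence:
  fixes A B M :: "'a::comm_semiring_0 mat"
  assumes A: "A \<in> carrier_mat N n" and B: "B \<in> carrier_mat n k" and M: "M \<in> carrier_mat N N"
  shows "transpose_mat (A * B) * M * (A * B) = transpose_mat B * (transpose_mat A * M * A) * B"
proof -
  have tA: "transpose_mat A \<in> carrier_mat n N" and tB: "transpose_mat B \<in> carrier_mat k n"
    using A B by simp_all
  have "transpose_mat (A * B) * M * (A * B) = transpose_mat B * (transpose_mat A * M) * (A * B)"
    using transpose_mult[OF A B] assoc_mult_mat[OF tB tA M] by simp
  also have "\<dots> = transpose_mat B * ((transpose_mat A * M) * (A * B))"
    using tA tB A B M by (simp add: assoc_mult_mat[of _ k n _ N _ k])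
  also have "(transpose_mat A * M) * (A * B) = (transpose_mat A * M * A) * B"
    by (rule assoc_mult_mat[symmetric, of _ n N _ n _ k]) (use tA A B M in auto)
  also have "transpose_mat B * \<dots> = transpose_mat B * (transpose_mat A * M * A) * B"
    using tA tB A B M by (simp add: assoc_mult_mat[of _ k n _ n _ k])
  finally show ?thesis .
qed

lemma symmetric_congruence:
  fixes G P :: "'a::comm_semiring_0 mat"
  assumes G: "G \<in> carrier_mat n n" and P: "P \<in> carrier_mat n k" and sym: "transpose_mat G = G"
  shows "transpose_mat (transpose_mat P * G * P) = transpose_mat P * G * P"
proof -
  have "transpose_mat (transpose_mat P * G * P) = transpose_mat P * transpose_mat (transpose_mat P * G)"
    using G P by (subst transpose_mult[of _ k n _ k]) auto
  also have "transpose_mat (transpose_mat P * G) = G * P"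
    using G P sym by (subst transpose_mult[of _ k n _ n]) auto
  finally show ?thesis using G P by (simp add: assoc_mult_mat[of _ k n _ n _ k])
qed

lemma join_cols_mult:
  fixes X Y Q :: "'a::comm_ring_1 mat"
  assumes X: "X \<in> carrier_mat N n" and Y: "Y \<in> carrier_mat N (N - n)" and Q: "Q \<in> carrier_mat n n"
  shows "join_cols (X * Q) Y = join_cols X Y *
     four_block_mat Q (0\<^sub>m n (N - n)) (0\<^sub>m (N - n) n) (1\<^sub>m (N - n))"
    (is "_ = _ * ?B")
proof (rule eq_matI)
  fix i j assume i: "i < dim_row (join_cols X Y * ?B)" and j: "j < dim_col (join_cols X Y * ?B)"
  have iN: "i < N" and jN: "j < n + (N - n)" using i j X Y Q by (auto simp: join_cols_def)
  have rhs: "(join_cols X Y * ?B) $$ (i, j) = (\<Sum>k<n + (N - n). join_cols X Y $$ (i, k) * ?B $$ (k, j))"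
    using iN jN X Y Q by (simp add: join_cols_def scalar_prod_def lessThan_atLeast0)
  show "join_cols (X * Q) Y $$ (i, j) = (join_cols X Y * ?B) $$ (i, j)"
  proof (cases "j < n")
    case True
    have "(\<Sum>k<n + (N - n). join_cols X Y $$ (i, k) * ?B $$ (k, j)) = (\<Sum>k<n. X $$ (i, k) * Q $$ (k, j))"
      by (rule sum.mono_neutral_cong_right) (use True Q X Y iN in \<open>auto simp: join_cols_def\<close>)
    then show ?thesis
      unfolding rhs using True Q X Y iN by (simp add: join_cols_def scalar_prod_def lessThan_atLeast0)
  next
    case False
    have "(\<Sum>k<n + (N - n). join_cols X Y $$ (i, k) * ?B $$ (k, j))
        = (\<Sum>k<n + (N - n). if k = j then Y $$ (i, j - n) else 0)"
      by (rule sum.cong) (use False Q X Y iN jN in \<open>auto simp: join_cols_def\<close>)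
    then show ?thesis unfolding rhs using False Q X Y iN jN by (simp add: join_cols_def)
  qed
qed (use X Y Q in \<open>auto simp: join_cols_def\<close>)

lemma sum_mult_addrow_mat:
  fixes f :: "nat \<Rightarrow> 'a::comm_ring_1"
  assumes "j < n" "b < n"
  shows "(\<Sum>d<n. f d * addrow_mat n t j i $$ (d, b)) = f b + (if b = i then t * f j else 0)"
proof -
  have "(\<Sum>d<n. f d * addrow_mat n t j i $$ (d, b))
      = (\<Sum>d<n. (if d = b then f d else 0) + (if b = i then (if d = j then t * f d else 0) else 0))"
    by (rule sum.cong) (use assms in \<open>auto simp: algebra_simps\<close>)
  also have "\<dots> = f b + (if b = i then t * f j else 0)"
    using assms by (simp add: sum.distrib)
  finally show ?thesis .
qed

lemma addrow_mat_congruence_index: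
  fixes G :: "'a::comm_ring_1 mat"
  assumes G: "G \<in> carrier_mat n n" and "j < n" "a < n" "b < n"
  shows "(transpose_mat (addrow_mat n t j i) * G * addrow_mat n t j i) $$ (a, b) =
    (G $$ (a, b) + (if b = i then t * G $$ (a, j) else 0))
    + (if a = i then t * (G $$ (j, b) + (if b = i then t * G $$ (j, j) else 0)) else 0)"
proof -
  let ?E = "addrow_mat n t j i :: 'a mat"
  have "(transpose_mat ?E * G * ?E) $$ (a, b) = (\<Sum>c<n. (\<Sum>d<n. G $$ (c, d) * ?E $$ (d, b)) * ?E $$ (c, a))"
    using index_transpose_mult_mult[OF _ G, of ?E n ?E n a b] assms
    by (simp add: sum_distrib_left sum_distrib_right mult_ac del: index_mat_addrow_mat)
  also have "\<dots> = (G $$ (a, b) + (if b = i then t * G $$ (a, j) else 0))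
    + (if a = i then t * (G $$ (j, b) + (if b = i then t * G $$ (j, j) else 0)) else 0)"
    using assms by (simp only: sum_mult_addrow_mat)
  finally show ?thesis .
qed

lemma addrow_mat_congruence_diag:
  fixes G :: "'a::comm_ring_1 mat"
  assumes G: "G \<in> carrier_mat n n" "transpose_mat G = G" and "i < n" "j < n"
  shows "(transpose_mat (addrow_mat n t j i) * G * addrow_mat n t j i) $$ (i, i) =
    G $$ (i, i) + 2 * t * G $$ (i, j) + t\<^sup>2 * G $$ (j, j)"
proof -
  have "G $$ (j, i) = G $$ (i, j)" using G assms(3,4) by (metis carrier_matD index_transpose_mat(1))
  then show ?thesis
    using addrow_mat_congruence_index[OF G(1) assms(4,3,3), of t i]
    by (simp add: power2_eq_square algebra_simps)
qed

lemma sum_mult_swaprows_mat: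
  fixes f :: "nat \<Rightarrow> 'a::comm_ring_1"
  assumes "i < n" "l < n" "b < n"
  shows "(\<Sum>d<n. f d * swaprows_mat n i l $$ (d, b)) = f (Transposition.transpose i l b)"
proof -
  have "(\<Sum>d<n. f d * swaprows_mat n i l $$ (d, b))
      = (\<Sum>d<n. if d = Transposition.transpose i l b then f d else 0)"
    by (rule sum.cong) (use assms in \<open>auto simp: transpose_def\<close>)
  also have "\<dots> = f (Transposition.transpose i l b)"
    using assms by (simp add: transpose_def)
  finally show ?thesis .
qed

lemma swaprows_mat_congruence_index:
  fixes G :: "'a::comm_ring_1 mat"
  assumes G: "G \<in> carrier_mat n n" and "i < n" "l < n" "a < n" "b < n"
  shows "(transpose_mat (swaprows_mat n i l) * G * swaprows_mat n i l) $$ (a, b) =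
     G $$ (Transposition.transpose i l a, Transposition.transpose i l b)"
proof -
  let ?S = "swaprows_mat n i l :: 'a mat"
  have "(transpose_mat ?S * G * ?S) $$ (a, b)
      = (\<Sum>c<n. (\<Sum>d<n. G $$ (c, d) * ?S $$ (d, b)) * ?S $$ (c, a))"
    using index_transpose_mult_mult[OF _ G, of ?S n ?S n a b] assms
    by (simp add: sum_distrib_left sum_distrib_right mult_ac del: index_mat_swaprows_mat)
  also have "\<dots> = G $$ (Transposition.transpose i l a, Transposition.transpose i l b)"
    using assms by (simp only: sum_mult_swaprows_mat)
  finally show ?thesis .
qed

definition prim_repr :: "'a::field set \<Rightarrow> 'a mat \<Rightarrow> 'a mat \<Rightarrow> bool" where
  "prim_repr R M G \<longleftrightarrow> (\<exists>X. prim_represents R M G X)"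

lemma join_cols_det_nonzero_imp_le:
  assumes "X \<in> carrier_mat N n" "Y \<in> carrier_mat N (N - n)" "det (join_cols X Y) \<noteq> 0"
  shows "n \<le> N"
  using assms unfolding det_def join_cols_def by (auto split: if_splits)

context valued_field
begin

lemma det_in_int_ring: "mat_over R A \<Longrightarrow> det A \<in> R"
  unfolding det_def mat_over_def by (auto intro!: int_ring_sum int_ring_prod)

lemma mat_over_mult:
  "mat_over R A \<Longrightarrow> mat_over R B \<Longrightarrow> dim_col A = dim_row B \<Longrightarrow> mat_over R (A * B)"
  unfolding mat_over_def by (auto simp: scalar_prod_def intro!: int_ring_sum)

lemma mat_over_transpose: "mat_over R A \<Longrightarrow> mat_over R (transpose_mat A)"
  unfolding mat_over_def by auto

lemma mat_over_congruence:
  "mat_over R G \<Longrightarrow> mat_over R P \<Longrightarrow> G \<in> carrier_mat n n \<Longrightarrow> P \<in> carrier_mat n k \<Longrightarrow>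
    mat_over R (transpose_mat P * G * P)"
  by (intro mat_over_mult mat_over_transpose) auto

lemma gram_congruence:
  assumes "G \<in> carrier_mat n n" "transpose_mat G = G" "mat_over R G"
    and "P \<in> carrier_mat n n" "mat_over R P"
  shows "transpose_mat P * G * P \<in> carrier_mat n n"
    "transpose_mat (transpose_mat P * G * P) = transpose_mat P * G * P"
    "mat_over R (transpose_mat P * G * P)"
proof -
  show "transpose_mat P * G * P \<in> carrier_mat n n" using assms by simp
  show "transpose_mat (transpose_mat P * G * P) = transpose_mat P * G * P"
    by (rule symmetric_congruence[OF assms(1,4,2)])
  show "mat_over R (transpose_mat P * G * P)" by (rule mat_over_congruence[OF assms(3,5,1,4)])
qed

lemma mat_over_addrow_mat: "t \<in> R \<Longrightarrow> mat_over R (addrow_mat n t j i)"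
  unfolding mat_over_def by auto

lemma mat_over_swaprows_mat: "mat_over R (swaprows_mat n i l)"
  unfolding mat_over_def by auto

text \<open>The representation is composed with \<open>Q = P\<^sup>-\<^sup>1\<close>, keeping its completion \<open>Y\<close>.\<close>

lemma prim_repr_congruence:
  assumes M: "M \<in> carrier_mat N N" and G: "G \<in> carrier_mat n n"
    and P: "P \<in> carrier_mat n n" "mat_over R P" and Q: "Q \<in> carrier_mat n n" "mat_over R Q"
    and PQ: "P * Q = 1\<^sub>m n"
    and repr: "prim_repr R M (transpose_mat P * G * P)"
  shows "prim_repr R M G"
proof -
  obtain X' Y u where X': "X' \<in> carrier_mat N n" "mat_over R X'"
    "transpose_mat X' * M * X' = transpose_mat P * G * P"
    and Y: "Y \<in> carrier_mat N (N - n)" "mat_over R Y" and u: "u \<in> R" "det (join_cols X' Y) * u = 1"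
    using repr M P unfolding prim_repr_def prim_represents_def represents_def by auto
  have "n \<le> N" using join_cols_det_nonzero_imp_le[OF X'(1) Y(1)] u(2) by force
  define X where "X = X' * Q"
  have X: "X \<in> carrier_mat N n" "mat_over R X"
    unfolding X_def using X' Q by (auto intro: mat_over_mult)
  have "transpose_mat X * M * X = transpose_mat Q * (transpose_mat P * G * P) * Q"
    unfolding X_def using transpose_mult_congruence[OF X'(1) Q(1) M] X'(3) by simp
  also have "\<dots> = transpose_mat (P * Q) * G * (P * Q)"
    using transpose_mult_congruence[OF P(1) Q(1) G] by simp
  finally have XMX: "transpose_mat X * M * X = G" using PQ G by simp
  have "det (join_cols X Y) = det (join_cols X' Y) * det Q"
  proof -
    let ?B = "four_block_mat Q (0\<^sub>m n (N - n)) (0\<^sub>m (N - n) n) (1\<^sub>m (N - n))"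
    have "join_cols X' Y \<in> carrier_mat N N" using X' Y \<open>n \<le> N\<close> by (auto simp: join_cols_def)
    moreover have "?B \<in> carrier_mat N N" using Q \<open>n \<le> N\<close> by (auto intro: four_block_carrier_mat)
    moreover have "det ?B = det Q"
      by (subst det_four_block_mat_lower_left_zero[OF Q(1)]) auto
    ultimately show ?thesis
      unfolding X_def join_cols_mult[OF X'(1) Y(1) Q(1)] by (simp add: det_mult)
  qed
  moreover have "det P * det Q = 1" using det_mult[OF P(1) Q(1)] PQ by simp
  ultimately have "det (join_cols X Y) * (u * det P) = (det (join_cols X' Y) * u) * (det P * det Q)"
    by (simp add: algebra_simps)
  then have "det (join_cols X Y) * (u * det P) = 1" using u \<open>det P * det Q = 1\<close> by simp
  moreover have "u * det P \<in> R" using u det_in_int_ring[OF P(2)] by simp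
  moreover have "dim_row M = N" "dim_row G = n" using M G by auto
  ultimately show ?thesis
    unfolding prim_repr_def prim_represents_def represents_def using X XMX Y by blast
qed

lemma prim_repr_addrow_congruence:
  assumes "M \<in> carrier_mat N N" "G \<in> carrier_mat n n" "t \<in> R" "i < n" "j < n" "i \<noteq> j"
    and "prim_repr R M (transpose_mat (addrow_mat n t j i) * G * addrow_mat n t j i)"
  shows "prim_repr R M G"
proof -
  have inv: "addrow_mat n t j i * addrow_mat n (- t) j i = 1\<^sub>m n" using addrow_mat_inv assms(4-6) by auto
  show ?thesis
    by (rule prim_repr_congruence[OF assms(1,2) _ _ _ _ inv assms(7)])
      (use assms(3) in \<open>simp_all add: mat_over_addrow_mat\<close>)
qed

lemma prim_repr_swaprows_congruence:
  assumes "M \<in> carrier_mat N N" "G \<in> carrier_mat n n" "i < n" "j < n"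
    and "prim_repr R M (transpose_mat (swaprows_mat n i j) * G * swaprows_mat n i j)"
  shows "prim_repr R M G"
  using prim_repr_congruence[OF assms(1,2) _ _ _ _ swaprows_mat_inv[OF assms(3,4)] assms(5)]
  by (simp add: mat_over_swaprows_mat)

end

section \<open>The lattice \<open>\<bbbH>\<^sup>l \<perp> \<langle>1, -1\<rangle>\<close>\<close>

lemma hyp_plane_carrier: "hyp_plane \<in> carrier_mat 2 2"
  unfolding hyp_plane_def mat_of_rows_list_def carrier_mat_def by simp

lemma hyp_plane_index:
  assumes "i < 2" "j < 2"
  shows "(hyp_plane :: 'a::{zero,one} mat) $$ (i, j) = (if i = j then 0 else 1)"
  using assms unfolding less_2_cases_iff
  by (auto simp: hyp_plane_def mat_of_rows_list_def numeral_2_eq_2)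

lemma hyp_pow_Suc: "hyp_pow (Suc k) = orth_sum hyp_plane (hyp_pow k)"
  unfolding hyp_pow_def by simp

lemma hyp_pow_carrier: "hyp_pow k \<in> carrier_mat (2 * k) (2 * k)"
proof (induct k)
  case 0
  then show ?case by (simp add: hyp_pow_def)
next
  case (Suc k)
  then show ?case using hyp_plane_carrier unfolding hyp_pow_Suc orth_sum_def carrier_mat_def by simp
qed

text \<open>In \<open>\<bbbH>\<^sup>k\<close> the basis vectors \<open>2p\<close> and \<open>2p + 1\<close> form the \<open>p\<close>-th hyperbolic pair.\<close>

definition hyp_partner :: "nat \<Rightarrow> nat" where
  "hyp_partner i = (if even i then i + 1 else i - 1)"

lemma hyp_partner_eq_iff: "j = hyp_partner i \<longleftrightarrow> i = hyp_partner j"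
  unfolding hyp_partner_def by presburger

lemma hyp_partner_less_iff: "hyp_partner i < 2 * k \<longleftrightarrow> i < 2 * k"
  unfolding hyp_partner_def by presburger

lemma hyp_pow_index:
  "i < 2 * k \<Longrightarrow> j < 2 * k \<Longrightarrow>
    (hyp_pow k :: 'a::{zero,one} mat) $$ (i, j) = (if j = hyp_partner i then 1 else 0)"
proof (induct k arbitrary: i j)
  case 0
  then show ?case by simp
next
  case (Suc k)
  have c: "(hyp_pow k :: 'a mat) \<in> carrier_mat (2 * k) (2 * k)" "(hyp_plane :: 'a mat) \<in> carrier_mat 2 2"
    by (rule hyp_pow_carrier hyp_plane_carrier)+
  have e: "(hyp_pow (Suc k) :: 'a mat) $$ (i, j) =
     (if i < 2 then if j < 2 then hyp_plane $$ (i, j) else 0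
      else if j < 2 then 0 else hyp_pow k $$ (i - 2, j - 2))"
    unfolding hyp_pow_Suc orth_sum_def using Suc.prems c by (subst index_mat_four_block) auto
  have "hyp_partner i < 2 \<longleftrightarrow> i < 2" using hyp_partner_less_iff[of i 1] by simp
  consider "i < 2" "j < 2" | "i < 2 \<longleftrightarrow> \<not> j < 2" | "\<not> i < 2" "\<not> j < 2" by blast
  then show ?case
  proof cases
    case 1
    then have "i = 0 \<or> i = 1" "j = 0 \<or> j = 1" by auto
    then show ?thesis unfolding e using hyp_plane_index[of i j] by (auto simp: hyp_partner_def)
  next
    case 2
    then have "j \<noteq> hyp_partner i" using \<open>hyp_partner i < 2 \<longleftrightarrow> i < 2\<close> by blast
    then show ?thesis unfolding e using 2 by auto
  next
    case 3
    then have "i - 2 < 2 * k" "j - 2 < 2 * k" using Suc.prems by auto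
    then have "hyp_pow k $$ (i - 2, j - 2) = (if j - 2 = hyp_partner (i - 2) then 1 else (0::'a))"
      by (rule Suc.hyps)
    moreover have "j - 2 = hyp_partner (i - 2) \<longleftrightarrow> j = hyp_partner i"
      unfolding hyp_partner_def using 3 by presburger
    ultimately show ?thesis unfolding e using 3 by simp
  qed
qed

lemma diag_lattice_one_minus_one_carrier:
  "(diag_lattice [1, -1] :: 'a::{zero,one,uminus} mat) \<in> carrier_mat 2 2"
  unfolding diag_lattice_def by (simp add: numeral_2_eq_2)

definition univ_lattice :: "nat \<Rightarrow> 'a::{zero,one,uminus} mat" where
  "univ_lattice l = orth_sum (hyp_pow l) (diag_lattice [1, -1])"

lemma univ_lattice_carrier: "univ_lattice l \<in> carrier_mat (2 * l + 2) (2 * l + 2)"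
  using hyp_pow_carrier[of l, where 'a='a] diag_lattice_one_minus_one_carrier[where 'a='a]
  unfolding univ_lattice_def orth_sum_def carrier_mat_def by simp

lemma dim_univ_lattice [simp]:
  "dim_row (univ_lattice l) = 2 * l + 2" "dim_col (univ_lattice l) = 2 * l + 2"
  using univ_lattice_carrier by blast+

lemma univ_lattice_index:
  assumes "i < 2 * l + 2" "j < 2 * l + 2"
  shows "(univ_lattice l :: 'a::{zero,one,uminus} mat) $$ (i, j) =
    (if i < 2 * l then (if j = hyp_partner i then 1 else 0)
     else if i = j then (if i = 2 * l then 1 else -1) else 0)"
proof -
  have c: "(hyp_pow l :: 'a mat) \<in> carrier_mat (2 * l) (2 * l)"
    "(diag_lattice [1, -1] :: 'a mat) \<in> carrier_mat 2 2"
    by (rule hyp_pow_carrier diag_lattice_one_minus_one_carrier)+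
  have e: "(univ_lattice l :: 'a mat) $$ (i, j) =
     (if i < 2 * l then if j < 2 * l then hyp_pow l $$ (i, j) else 0
      else if j < 2 * l then 0 else diag_lattice [1, -1] $$ (i - 2 * l, j - 2 * l))"
    unfolding univ_lattice_def orth_sum_def using assms c by (subst index_mat_four_block) auto
  consider "i < 2 * l" "j < 2 * l" | "i < 2 * l \<longleftrightarrow> \<not> j < 2 * l"
    | "i = 2 * l \<or> i = 2 * l + 1" "j = 2 * l \<or> j = 2 * l + 1"
    using assms by linarith
  then show ?thesis
  proof cases
    case 1
    then show ?thesis unfolding e using hyp_pow_index[OF 1] by simp
  next
    case 2
    then have "j \<noteq> hyp_partner i" "i \<noteq> j" using hyp_partner_less_iff[of i l] by auto
    then show ?thesis unfolding e using 2 by auto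
  next
    case 3
    then show ?thesis unfolding e by (auto simp: diag_lattice_def)
  qed
qed

lemma sum_univ_lattice_row:
  fixes f :: "nat \<Rightarrow> 'a::comm_ring_1"
  assumes i: "i < 2 * l + 2"
  shows "(\<Sum>j<2 * l + 2. univ_lattice l $$ (i, j) * f j) =
    (if i < 2 * l then f (hyp_partner i) else if i = 2 * l then f i else - f i)"
proof -
  consider "i < 2 * l" | "i = 2 * l" | "i = 2 * l + 1" using i by linarith
  then show ?thesis
  proof cases
    case 1
    then have "(\<Sum>j<2 * l + 2. univ_lattice l $$ (i, j) * f j)
        = (\<Sum>j<2 * l + 2. if j = hyp_partner i then f j else 0)"
      by (intro sum.cong refl) (simp add: univ_lattice_index)
    then show ?thesis using 1 hyp_partner_less_iff[of i l] by simp
  next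
    case 2
    then have "(\<Sum>j<2 * l + 2. univ_lattice l $$ (i, j) * f j)
        = (\<Sum>j<2 * l + 2. if j = i then f j else 0)"
      by (intro sum.cong refl) (simp add: univ_lattice_index)
    then show ?thesis using 2 by simp
  next
    case 3
    then have "(\<Sum>j<2 * l + 2. univ_lattice l $$ (i, j) * f j)
        = (\<Sum>j<2 * l + 2. if j = i then - f j else 0)"
      by (intro sum.cong refl) (simp add: univ_lattice_index)
    then show ?thesis using 3 by simp
  qed
qed

lemma sum_lessThan_double:
  fixes f :: "nat \<Rightarrow> 'a::comm_monoid_add"
  shows "(\<Sum>i<2 * n. f i) = (\<Sum>p<n. f (2 * p) + f (2 * p + 1))"
  by (induct n) (simp_all add: algebra_simps)

lemma univ_lattice_congruence_index:
  fixes X :: "'a::comm_ring_1 mat"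
  assumes X: "X \<in> carrier_mat (2 * l + 2) m" and a: "a < m" and b: "b < m"
  shows "(transpose_mat X * univ_lattice l * X) $$ (a, b) =
    (\<Sum>p<l. X $$ (2 * p, a) * X $$ (2 * p + 1, b) + X $$ (2 * p + 1, a) * X $$ (2 * p, b))
    + X $$ (2 * l, a) * X $$ (2 * l, b) - X $$ (2 * l + 1, a) * X $$ (2 * l + 1, b)"
proof -
  define h where "h i = X $$ (i, a) * X $$ (hyp_partner i, b)" for i
  define g where "g i = X $$ (i, a) *
      (if i < 2 * l then X $$ (hyp_partner i, b)
        else if i = 2 * l then X $$ (i, b) else - X $$ (i, b))" for i
  have "(transpose_mat X * univ_lattice l * X) $$ (a, b)
      = (\<Sum>i<2 * l + 2. X $$ (i, a) * (\<Sum>j<2 * l + 2. univ_lattice l $$ (i, j) * X $$ (j, b)))"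
    by (simp only: index_transpose_mult_mult[OF X univ_lattice_carrier X a b]
        sum_distrib_left mult.assoc)
  also have "\<dots> = (\<Sum>i<2 * l + 2. g i)"
    by (rule sum.cong[OF refl]) (simp only: lessThan_iff sum_univ_lattice_row g_def)
  also have "\<dots> = (\<Sum>i<2 * l. g i) + g (2 * l) + g (2 * l + 1)"
    by (simp add: numeral_2_eq_2)
  also have "(\<Sum>i<2 * l. g i) = (\<Sum>i<2 * l. h i)"
    by (rule sum.cong) (simp_all add: g_def h_def)
  also have "\<dots> = (\<Sum>p<l. h (2 * p) + h (2 * p + 1))"
    by (rule sum_lessThan_double)
  finally show ?thesis by (simp add: g_def h_def hyp_partner_def)
qed

lemma det_orth_sum:
  fixes A B :: "'a::idom mat"
  assumes A: "A \<in> carrier_mat a a" and B: "B \<in> carrier_mat b b"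
  shows "det (orth_sum A B) = det A * det B"
  unfolding orth_sum_def using A B by (subst det_four_block_mat_lower_left_zero[OF A _ _ B]) auto

lemma det_hyp_plane: "det (hyp_plane :: 'a::idom mat) = -1"
proof -
  have "(hyp_plane :: 'a mat) = swaprows_mat 2 0 1"
    using hyp_plane_carrier by (intro eq_matI) (auto simp: hyp_plane_index)
  then show ?thesis using det_swaprows_mat[of 0 2 1, where 'a='a] by simp
qed

lemma det_diag_one_minus_one: "det (diag_lattice [1, -1] :: 'a::idom mat) = -1"
proof -
  have "(diag_lattice [1, -1] :: 'a mat) = multrow_mat 2 1 (-1)"
    by (rule eq_matI) (auto simp: diag_lattice_def less_2_cases_iff)
  then show ?thesis by (simp add: det_multrow_mat)
qed

lemma det_hyp_pow: "det (hyp_pow k :: 'a::idom mat) = (-1) ^ k"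
  by (induct k)
    (simp_all add: hyp_pow_def[of 0] hyp_pow_Suc
      det_orth_sum[OF hyp_plane_carrier hyp_pow_carrier] det_hyp_plane)

lemma det_univ_lattice: "det (univ_lattice l :: 'a::idom mat) = (-1) ^ (l + 1)"
  unfolding univ_lattice_def
  by (simp add: det_orth_sum[OF hyp_pow_carrier diag_lattice_one_minus_one_carrier] det_hyp_pow
      det_diag_one_minus_one)

lemma transpose_univ_lattice:
  "transpose_mat (univ_lattice l) = (univ_lattice l :: 'a::{zero,one,uminus} mat)"
proof (rule eq_matI)
  fix i j assume "i < dim_row (univ_lattice l :: 'a mat)" "j < dim_col (univ_lattice l :: 'a mat)"
  then have ij: "i < 2 * l + 2" "j < 2 * l + 2" by auto
  then show "transpose_mat (univ_lattice l) $$ (i, j) = (univ_lattice l :: 'a mat) $$ (i, j)"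
    using hyp_partner_eq_iff[of j i] hyp_partner_less_iff[of j l] by (auto simp: univ_lattice_index)
qed auto

lemma (in valued_field) univ_lattice_gram: "lattice_gram R (2 * l + 2) (univ_lattice l)"
  unfolding lattice_gram_def mat_over_def
  using univ_lattice_carrier transpose_univ_lattice by (auto simp: univ_lattice_index det_univ_lattice)

section \<open>Primitive representations by \<open>\<bbbH>\<^sup>l \<perp> \<langle>1, -1\<rangle>\<close>\<close>

lemma det_permuted_lower_triangular:
  fixes A :: "'a::comm_ring_1 mat"
  assumes A: "A \<in> carrier_mat n n" and \<pi>: "\<pi> permutes {0..<n}"
    and zero: "\<And>i j. i < j \<Longrightarrow> j < n \<Longrightarrow> A $$ (\<pi> i, j) = 0"
  shows "det A = signof \<pi> * (\<Prod>i<n. A $$ (\<pi> i, i))"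
proof -
  let ?B = "mat n n (\<lambda>(i, j). A $$ (\<pi> i, j))"
  have "(signof \<pi> :: 'a) * signof \<pi> = 1" by (simp add: sign_def)
  then have "det A = signof \<pi> * (signof \<pi> * det A)" by (simp add: mult.assoc[symmetric])
  also have "signof \<pi> * det A = det ?B" by (rule det_permute_rows[OF A \<pi>, symmetric])
  also have "\<dots> = (\<Prod>i<n. A $$ (\<pi> i, i))"
    using zero by (subst det_lower_triangular[of n]) (auto simp: prod_list_diag_prod lessThan_atLeast0)
  finally show ?thesis .
qed

text \<open>An ordering of the basis of \<open>\<bbbH>\<^sup>l \<perp> \<langle>1, -1\<rangle>\<close>: the even vectors \<open>2p\<close>, then \<open>r\<close>, then the
  odd vectors \<open>2p + 1\<close>, then the other one of \<open>2l, 2l + 1\<close>. The columns of \<open>complement_mat l r\<close>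
  are the last \<open>l + 1\<close> of these vectors, so that \<open>join_cols X (complement_mat l r)\<close> becomes
  lower triangular when its rows are taken in this order.\<close>

definition block_perm :: "nat \<Rightarrow> nat \<Rightarrow> nat \<Rightarrow> nat" where
  "block_perm l r i = (if i < l then 2 * i else if i = l then r else if i \<le> 2 * l then 2 * (i - l) - 1
     else if i = 2 * l + 1 then 4 * l + 1 - r else i)"

lemma block_perm_permutes:
  assumes r: "r = 2 * l \<or> r = 2 * l + 1"
  shows "block_perm l r permutes {0..<2 * l + 2}"
proof (rule bij_imp_permutes)
  have inj: "inj_on (block_perm l r) {0..<2 * l + 2}"
    using r unfolding inj_on_def block_perm_def by (auto split: if_splits) presburger+
  moreover have "block_perm l r ` {0..<2 * l + 2} \<subseteq> {0..<2 * l + 2}"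
    using r unfolding block_perm_def by auto
  ultimately show "bij_betw (block_perm l r) {0..<2 * l + 2} {0..<2 * l + 2}"
    unfolding bij_betw_def using endo_inj_surj by blast
qed (simp add: block_perm_def)

definition complement_mat :: "nat \<Rightarrow> nat \<Rightarrow> 'a::{zero,one} mat" where
  "complement_mat l r = mat (2 * l + 2) (l + 1)
    (\<lambda>(i, q). if i = block_perm l r (l + 1 + q) then 1 else 0)"

lemma complement_mat_carrier: "complement_mat l r \<in> carrier_mat (2 * l + 2) (l + 1)"
  unfolding complement_mat_def by simp

lemma join_cols_complement_mat_index:
  assumes "X \<in> carrier_mat (2 * l + 2) (l + 1)" "i < 2 * l + 2" "j < 2 * l + 2"
  shows "join_cols X (complement_mat l r) $$ (i, j) =
    (if j < l + 1 then X $$ (i, j) else if i = block_perm l r j then 1 else 0)"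
  using assms unfolding join_cols_def complement_mat_def by auto

lemma det_join_cols_complement_mat:
  fixes X :: "'a::comm_ring_1 mat"
  assumes X: "X \<in> carrier_mat (2 * l + 2) (l + 1)"
    and X_even: "\<And>p b. p < l \<Longrightarrow> b < l + 1 \<Longrightarrow> X $$ (2 * p, b) = (if b = p then 1 else 0)"
    and r: "r = 2 * l \<or> r = 2 * l + 1"
  shows "det (join_cols X (complement_mat l r)) = signof (block_perm l r) * X $$ (r, l)"
proof -
  let ?Z = "join_cols X (complement_mat l r)" and ?\<pi> = "block_perm l r"
  have Z: "?Z \<in> carrier_mat (2 * l + 2) (2 * l + 2)"
    using X unfolding join_cols_def complement_mat_def by auto
  note Z_index = join_cols_complement_mat_index[OF X]
  have \<pi>: "?\<pi> permutes {0..<2 * l + 2}" by (rule block_perm_permutes[OF r])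
  then have \<pi>_less: "?\<pi> i < 2 * l + 2" if "i < 2 * l + 2" for i
    using that by (simp add: permutes_in_image)
  have \<pi>_inj: "?\<pi> i = ?\<pi> j \<Longrightarrow> i = j" for i j
    using permutes_inj[OF \<pi>] by (simp add: inj_eq)
  have zero: "?Z $$ (?\<pi> i, j) = 0" if ij: "i < j" "j < 2 * l + 2" for i j
  proof -
    have Zij: "?Z $$ (?\<pi> i, j) = (if j < l + 1 then X $$ (?\<pi> i, j) else if ?\<pi> i = ?\<pi> j then 1 else 0)"
      using ij by (intro Z_index \<pi>_less) auto
    show ?thesis
    proof (cases "j < l + 1")
      case True
      then have "?\<pi> i = 2 * i" "i < l" using ij by (auto simp: block_perm_def)
      then show ?thesis unfolding Zij using X_even[of i j] ij True by auto
    next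
      case False
      then show ?thesis unfolding Zij using \<pi>_inj[of i j] ij by auto
    qed
  qed
  have diag: "?Z $$ (?\<pi> i, i) = (if i = l then X $$ (r, l) else 1)" if i: "i < 2 * l + 2" for i
    using Z_index[OF \<pi>_less[OF i] i] X_even[of i i] i by (auto simp: block_perm_def)
  have "det ?Z = signof ?\<pi> * (\<Prod>i<2 * l + 2. ?Z $$ (?\<pi> i, i))"
    by (rule det_permuted_lower_triangular[OF Z \<pi> zero])
  also have "(\<Prod>i<2 * l + 2. ?Z $$ (?\<pi> i, i)) = (\<Prod>i<2 * l + 2. if i = l then X $$ (r, l) else 1)"
    by (rule prod.cong) (simp_all add: diag)
  finally show ?thesis by simp
qed

text \<open>The map sending the \<open>a\<close>-th basis vector to
  \<open>e\<^sub>2\<^sub>a + \<Sum>\<^sub>p S p a e\<^sub>2\<^sub>p\<^sub>+\<^sub>1 + u a e\<^sub>2\<^sub>l + w a e\<^sub>2\<^sub>l\<^sub>+\<^sub>1\<close>, where the term \<open>e\<^sub>2\<^sub>a\<close> is absent for \<open>a = l\<close>.\<close>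

definition repr_mat :: "nat \<Rightarrow> (nat \<Rightarrow> nat \<Rightarrow> 'a) \<Rightarrow> (nat \<Rightarrow> 'a) \<Rightarrow> (nat \<Rightarrow> 'a) \<Rightarrow> 'a::{zero,one} mat" where
  "repr_mat l S u w = mat (2 * l + 2) (l + 1) (\<lambda>(i, b).
     if i < 2 * l then (if even i then (if b = i div 2 then 1 else 0) else S (i div 2) b)
     else if i = 2 * l then u b else w b)"

lemma repr_mat_carrier: "repr_mat l S u w \<in> carrier_mat (2 * l + 2) (l + 1)"
  unfolding repr_mat_def by simp

lemma repr_mat_index:
  assumes "b < l + 1"
  shows "p < l \<Longrightarrow> repr_mat l S u w $$ (2 * p, b) = (if b = p then 1 else 0)"
    and "p < l \<Longrightarrow> repr_mat l S u w $$ (2 * p + 1, b) = S p b"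
    and "repr_mat l S u w $$ (2 * l, b) = u b"
    and "repr_mat l S u w $$ (2 * l + 1, b) = w b"
  using assms unfolding repr_mat_def by auto

lemma repr_mat_congruence_index:
  fixes S :: "nat \<Rightarrow> nat \<Rightarrow> 'a::comm_ring_1"
  assumes a: "a < l + 1" and b: "b < l + 1"
  shows "(transpose_mat (repr_mat l S u w) * univ_lattice l * repr_mat l S u w) $$ (a, b) =
    (if a < l then S a b else 0) + (if b < l then S b a else 0) + u a * u b - w a * w b"
proof -
  let ?X = "repr_mat l S u w"
  have "(transpose_mat ?X * univ_lattice l * ?X) $$ (a, b) =
    (\<Sum>p<l. ?X $$ (2 * p, a) * ?X $$ (2 * p + 1, b) + ?X $$ (2 * p + 1, a) * ?X $$ (2 * p, b))
    + ?X $$ (2 * l, a) * ?X $$ (2 * l, b) - ?X $$ (2 * l + 1, a) * ?X $$ (2 * l + 1, b)"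
    by (rule univ_lattice_congruence_index[OF repr_mat_carrier a b])
  also have "(\<Sum>p<l. ?X $$ (2 * p, a) * ?X $$ (2 * p + 1, b) + ?X $$ (2 * p + 1, a) * ?X $$ (2 * p, b))
      = (\<Sum>p<l. (if a = p then S p b else 0) + (if b = p then S p a else 0))"
  proof (rule sum.cong[OF refl])
    fix p assume "p \<in> {..<l}"
    then have p: "p < l" by simp
    show "?X $$ (2 * p, a) * ?X $$ (2 * p + 1, b) + ?X $$ (2 * p + 1, a) * ?X $$ (2 * p, b)
        = (if a = p then S p b else 0) + (if b = p then S p a else 0)"
      unfolding repr_mat_index(1,2)[OF a p] repr_mat_index(1,2)[OF b p] by simp
  qed
  also have "\<dots> = (if a < l then S a b else 0) + (if b < l then S b a else 0)"
    by (simp add: sum.distrib)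
  finally show ?thesis by (simp only: repr_mat_index(3,4)[OF a] repr_mat_index(3,4)[OF b])
qed

text \<open>The odd coordinates of \<open>repr_mat\<close> that absorb the discrepancy between \<open>G\<close> and the
  contribution \<open>u a u b - w a w b\<close> of \<open>\<langle>1, -1\<rangle>\<close>.\<close>

definition repr_odd_coords :: "'a mat \<Rightarrow> (nat \<Rightarrow> 'a) \<Rightarrow> (nat \<Rightarrow> 'a) \<Rightarrow> nat \<Rightarrow> nat \<Rightarrow> 'a::field" where
  "repr_odd_coords G u w a b = (let d = G $$ (a, b) - u a * u b + w a * w b in
     if a < b then d else if a = b then d / 2 else 0)"

lemma repr_mat_congruence_eq:
  fixes G :: "'a::field mat"
  assumes two: "(2::'a) \<noteq> 0"
    and G: "G \<in> carrier_mat (l + 1) (l + 1)" "transpose_mat G = G"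
    and last: "G $$ (l, l) = u l * u l - w l * w l"
  shows "transpose_mat (repr_mat l (repr_odd_coords G u w) u w) * univ_lattice l
      * repr_mat l (repr_odd_coords G u w) u w = G"
proof (rule eq_matI)
  let ?S = "repr_odd_coords G u w"
  fix a b assume "a < dim_row G" "b < dim_col G"
  then have a: "a < l + 1" and b: "b < l + 1" using G(1) by auto
  have "G $$ (b, a) = G $$ (a, b)" using G a b by (metis carrier_matD index_transpose_mat(1))
  then have "(if a < l then ?S a b else 0) + (if b < l then ?S b a else 0)
    = G $$ (a, b) - u a * u b + w a * w b"
    using a b last two by (cases "a = l \<and> b = l") (auto simp: repr_odd_coords_def Let_def mult.commute)
  then show "(transpose_mat (repr_mat l ?S u w) * univ_lattice l * repr_mat l ?S u w) $$ (a, b)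
    = G $$ (a, b)"
    unfolding repr_mat_congruence_index[OF a b] by simp
qed (use G(1) in \<open>auto simp: repr_mat_def\<close>)

context dyadic_valued_field
begin

lemma prim_repr_univ_lattice_if_unit_entry:
  assumes X: "X \<in> carrier_mat (2 * l + 2) (l + 1)" "mat_over R X"
    and XMX: "transpose_mat X * univ_lattice l * X = G"
    and X_even: "\<And>p b. p < l \<Longrightarrow> b < l + 1 \<Longrightarrow> X $$ (2 * p, b) = (if b = p then 1 else 0)"
    and r: "r = 2 * l \<or> r = 2 * l + 1" and unit: "X $$ (r, l) \<in> R" "X $$ (r, l) / 2 \<notin> R"
  shows "prim_repr R (univ_lattice l) G"
proof -
  let ?Y = "complement_mat l r :: 'a mat" and ?\<sigma> = "signof (block_perm l r) :: 'a"
  have "?\<sigma> * ?\<sigma> = 1" by (simp add: sign_def)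
  moreover have "inverse (X $$ (r, l)) \<in> R" "X $$ (r, l) \<noteq> 0"
    using unit_inverse_in_int_ring[OF unit] by blast+
  ultimately have "det (join_cols X ?Y) * (?\<sigma> * inverse (X $$ (r, l))) = 1"
    using det_join_cols_complement_mat[OF X(1) X_even r] by (simp add: field_simps)
  moreover have "?\<sigma> * inverse (X $$ (r, l)) \<in> R" using \<open>inverse (X $$ (r, l)) \<in> R\<close> by simp
  moreover have "mat_over R ?Y" unfolding mat_over_def complement_mat_def by auto
  moreover have "dim_row G = l + 1" using XMX X(1) by auto
  ultimately show ?thesis
    unfolding prim_repr_def prim_represents_def represents_def
    using X XMX complement_mat_carrier[of l r] by auto
qed

text \<open>The basis vector \<open>a < l\<close> goes to \<open>e\<^sub>2\<^sub>a + r\<^sub>a e\<^sub>2\<^sub>l + (\<dots>)\<close> with \<open>r\<^sub>a\<^sup>2 \<equiv> G a a (mod 2)\<close>,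
  which makes the halved diagonal entries of \<open>repr_odd_coords\<close> integral, and the last one to
  \<open>x\<^sub>0 e\<^sub>2\<^sub>l + y\<^sub>0 e\<^sub>2\<^sub>l\<^sub>+\<^sub>1 + (\<dots>)\<close>.\<close>

lemma prim_repr_univ_lattice_if_diff_of_squares:
  assumes finite_residues: "finite_residue_field v"
    and G: "G \<in> carrier_mat (l + 1) (l + 1)" "transpose_mat G = G" "mat_over R G"
    and xy: "x0 \<in> R" "y0 \<in> R" "x0\<^sup>2 - y0\<^sup>2 = G $$ (l, l)" "x0 / 2 \<notin> R \<or> y0 / 2 \<notin> R"
  shows "prim_repr R (univ_lattice l) G"
proof -
  have G_int: "G $$ (a, b) \<in> R" if "a < l + 1" "b < l + 1" for a b
    using G(1,3) that unfolding mat_over_def by auto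
  define r where "r a = (SOME r. r \<in> R \<and> (G $$ (a, a) - r\<^sup>2) / 2 \<in> R)" for a
  have r: "r a \<in> R \<and> (G $$ (a, a) - (r a)\<^sup>2) / 2 \<in> R" if "a < l + 1" for a
    unfolding r_def by (rule someI_ex)
    (use square_root_mod_two[OF finite_residues G_int[OF that that]] in blast)
  define u where "u a = (if a < l then r a else x0)" for a
  define w where "w a = (if a < l then 0 else y0)" for a
  define X where "X = repr_mat l (repr_odd_coords G u w) u w"
  have u: "u a \<in> R" if "a < l + 1" for a unfolding u_def using r[OF that] xy by auto
  have w: "w a \<in> R" for a unfolding w_def using xy by auto
  have "repr_odd_coords G u w a b \<in> R" if "a < l" "b < l + 1" for a b
    using that r[of a] G_int u w
    by (auto simp: repr_odd_coords_def Let_def u_def w_def power2_eq_square)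
  then have "mat_over R X"
    unfolding mat_over_def X_def repr_mat_def using u w by (auto simp: less_mult_imp_div_less)
  moreover have "transpose_mat X * univ_lattice l * X = G"
    unfolding X_def using xy(3) by (intro repr_mat_congruence_eq[OF two_nonzero G(1,2)])
      (simp add: u_def w_def power2_eq_square)
  moreover have "X $$ (2 * l, l) = x0" "X $$ (2 * l + 1, l) = y0"
    unfolding X_def repr_mat_index(3,4)[OF less_add_one] by (simp_all add: u_def w_def)
  ultimately show ?thesis
    using prim_repr_univ_lattice_if_unit_entry[of X l G] repr_mat_carrier repr_mat_index(1) xy
    unfolding X_def by metis
qed

lemma unit_or_four_dvd_diff_of_squares:
  assumes "finite_residue_field v" and c0: "c0 \<in> R" "c0 / 2 \<notin> R" "(c0 - 1) / 2 \<notin> R"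
    and g: "g \<in> R" "g / 2 \<notin> R \<or> g / 4 \<in> R"
  shows "\<exists>x\<in>R. \<exists>y\<in>R. x\<^sup>2 - y\<^sup>2 = g \<and> (x / 2 \<notin> R \<or> y / 2 \<notin> R)"
  using g unit_diff_of_squares[OF assms(1) g(1)] four_dvd_diff_of_squares[OF c0] by blast

lemma prim_repr_univ_lattice_if_good_diagonal:
  assumes finite_residues: "finite_residue_field v" and c0: "c0 \<in> R" "c0 / 2 \<notin> R" "(c0 - 1) / 2 \<notin> R"
    and G: "G \<in> carrier_mat (l + 1) (l + 1)" "transpose_mat G = G" "mat_over R G"
    and i: "i < l + 1" and good: "G $$ (i, i) / 2 \<notin> R \<or> G $$ (i, i) / 4 \<in> R"
  shows "prim_repr R (univ_lattice l) G"
proof -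
  let ?P = "swaprows_mat (l + 1) i l :: 'a mat"
  let ?G' = "transpose_mat ?P * G * ?P"
  have "?G' $$ (l, l) = G $$ (i, i)"
    using swaprows_mat_congruence_index[OF G(1) i, of l l l] by simp
  moreover have "G $$ (i, i) \<in> R" using G(1,3) i unfolding mat_over_def by auto
  ultimately obtain x y where xy: "x \<in> R" "y \<in> R" "x\<^sup>2 - y\<^sup>2 = ?G' $$ (l, l)" "x / 2 \<notin> R \<or> y / 2 \<notin> R"
    using unit_or_four_dvd_diff_of_squares[OF finite_residues c0 _ good] by auto
  have "prim_repr R (univ_lattice l) ?G'"
    by (rule prim_repr_univ_lattice_if_diff_of_squares[OF finite_residues
          gram_congruence[OF G swaprows_mat_carrier mat_over_swaprows_mat] xy])
  then show ?thesis by (rule prim_repr_swaprows_congruence[OF univ_lattice_carrier G(1) i, rotated]) simp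
qed

text \<open>If both diagonal entries are \<open>2 \<times>\<close> units, \<open>e\<^sub>i \<mapsto> e\<^sub>i + t e\<^sub>j\<close> with \<open>t\<^sup>2 \<equiv> G i i / G j j (mod 2)\<close>
  makes the \<open>i\<close>-th diagonal entry divisible by \<open>4\<close>.\<close>

lemma prim_repr_univ_lattice_if_even_off_diagonal:
  assumes finite_residues: "finite_residue_field v" and c0: "c0 \<in> R" "c0 / 2 \<notin> R" "(c0 - 1) / 2 \<notin> R"
    and G: "G \<in> carrier_mat (l + 1) (l + 1)" "transpose_mat G = G" "mat_over R G"
    and ij: "i < l + 1" "j < l + 1" "i \<noteq> j" and even: "G $$ (i, j) / 2 \<in> R"
  shows "prim_repr R (univ_lattice l) G"
proof (cases "G $$ (i, i) / 2 \<notin> R \<or> G $$ (i, i) / 4 \<in> R \<or> G $$ (j, j) / 2 \<notin> R \<or> G $$ (j, j) / 4 \<in> R")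
  case True
  then show ?thesis
    using prim_repr_univ_lattice_if_good_diagonal[OF finite_residues c0 G] ij by blast
next
  case False
  define \<alpha> \<beta> \<gamma> where "\<alpha> = G $$ (i, i) / 2" and "\<beta> = G $$ (j, j) / 2" and "\<gamma> = G $$ (i, j) / 2"
  have "\<alpha> \<in> R" "\<beta> \<in> R" "\<beta> / 2 \<notin> R" "\<gamma> \<in> R"
    using False even by (auto simp: \<alpha>_def \<beta>_def \<gamma>_def)
  then have \<beta>_inv: "inverse \<beta> \<in> R" "\<beta> \<noteq> 0" using unit_inverse_in_int_ring by blast+
  obtain t where t: "t \<in> R" "(\<alpha> * inverse \<beta> - t\<^sup>2) / 2 \<in> R"
    using square_root_mod_two[OF finite_residues, of "\<alpha> * inverse \<beta>"] \<open>\<alpha> \<in> R\<close> \<beta>_inv by auto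
  let ?P = "addrow_mat (l + 1) t j i"
  let ?G' = "transpose_mat ?P * G * ?P"
  have "?G' $$ (i, i) = 2 * \<alpha> + 4 * t * \<gamma> + 2 * t\<^sup>2 * \<beta>"
    unfolding addrow_mat_congruence_diag[OF G(1,2) ij(1,2)] by (simp add: \<alpha>_def \<beta>_def \<gamma>_def)
  also have "\<dots> = 4 * (\<beta> * ((\<alpha> * inverse \<beta> - t\<^sup>2) / 2) + t * \<gamma> + t\<^sup>2 * \<beta>)"
    using \<beta>_inv by (simp add: field_simps)
  finally have "?G' $$ (i, i) / 4 = \<beta> * ((\<alpha> * inverse \<beta> - t\<^sup>2) / 2) + t * \<gamma> + t\<^sup>2 * \<beta>"
    by simp
  also have "\<dots> \<in> R" using t \<open>\<beta> \<in> R\<close> \<open>\<gamma> \<in> R\<close> by blast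
  finally have "prim_repr R (univ_lattice l) ?G'"
    by (intro prim_repr_univ_lattice_if_good_diagonal[OF finite_residues c0
          gram_congruence[OF G] ij(1)] mat_over_addrow_mat t) simp_all
  then show ?thesis by (rule prim_repr_addrow_congruence[OF univ_lattice_carrier G(1) t(1) ij(1,2,3)])
qed

text \<open>With \<open>l \<ge> 2\<close> there are three basis vectors, and \<open>e\<^sub>1 \<mapsto> e\<^sub>1 + t e\<^sub>2\<close> with
  \<open>t = - G 0 1 / G 0 2\<close> makes \<open>G 0 1\<close> vanish if \<open>G 0 2\<close> is a unit.\<close>

lemma prim_repr_univ_lattice:
  assumes finite_residues: "finite_residue_field v" and c0: "c0 \<in> R" "c0 / 2 \<notin> R" "(c0 - 1) / 2 \<notin> R"
    and G: "G \<in> carrier_mat (l + 1) (l + 1)" "transpose_mat G = G" "mat_over R G"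
    and l: "2 \<le> l"
  shows "prim_repr R (univ_lattice l) G"
proof (cases "G $$ (0, 2) / 2 \<in> R")
  case True
  then show ?thesis
    using l by (intro prim_repr_univ_lattice_if_even_off_diagonal[OF finite_residues c0 G, of 0 2]) auto
next
  case False
  have "G $$ (0, 2) \<in> R" "G $$ (0, 1) \<in> R" using G(1,3) l unfolding mat_over_def by auto
  then have inv: "inverse (G $$ (0, 2)) \<in> R" "G $$ (0, 2) \<noteq> 0"
    using False unit_inverse_in_int_ring by blast+
  define t where "t = - G $$ (0, 1) * inverse (G $$ (0, 2))"
  have t: "t \<in> R" unfolding t_def using inv \<open>G $$ (0, 1) \<in> R\<close> by simp
  let ?P = "addrow_mat (l + 1) t 2 1"
  let ?G' = "transpose_mat ?P * G * ?P"
  have "?G' $$ (0, 1) = G $$ (0, 1) + t * G $$ (0, 2)"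
    using addrow_mat_congruence_index[OF G(1), of 2 0 1 t 1] l by simp
  also have "\<dots> = 0" unfolding t_def using inv by simp
  finally have "?G' $$ (0, 1) / 2 \<in> R" by simp
  then have "prim_repr R (univ_lattice l) ?G'"
    using l by (intro prim_repr_univ_lattice_if_even_off_diagonal[OF finite_residues c0
          gram_congruence[OF G], of _ 0 1] mat_over_addrow_mat t) auto
  then show ?thesis using l by (intro prim_repr_addrow_congruence[OF univ_lattice_carrier G(1) t]) auto
qed

end

section \<open>The lower bound\<close>

lemma permutes_some_small_to_small:
  fixes \<sigma> :: "nat \<Rightarrow> nat"
  assumes \<sigma>: "\<sigma> permutes {0..<m}" and "n \<le> m" "m < 2 * n"
  shows "\<exists>i<n. \<sigma> i < n"
proof (rule ccontr)
  assume none: "\<not> ?thesis"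
  have "\<sigma> ` {0..<n} \<subseteq> {n..<m}"
  proof
    fix x assume "x \<in> \<sigma> ` {0..<n}"
    then obtain i where i: "i < n" "x = \<sigma> i" by auto
    moreover have "\<sigma> i < m" using permutes_in_image[OF \<sigma>, of i] i(1) assms(2) by simp
    ultimately show "x \<in> {n..<m}" using none by auto
  qed
  then have "card (\<sigma> ` {0..<n}) \<le> card {n..<m}" by (intro card_mono) auto
  moreover have "inj_on \<sigma> {0..<n}" using permutes_inj[OF \<sigma>] by (rule inj_on_subset) simp
  ultimately have "n \<le> m - n" using card_image by fastforce
  then show False using assms(3) by simp
qed

context valued_field
begin

text \<open>If \<open>m < 2 n\<close>, every term of the Leibniz expansion of \<open>det K\<close> contains an entry of the
  upper left \<open>n \<times> n\<close> block.\<close>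

lemma det_divisible_if_block_divisible:
  assumes K: "K \<in> carrier_mat m m" "mat_over R K" and m: "n \<le> m" "m < 2 * n"
    and block: "\<And>a b. a < n \<Longrightarrow> b < n \<Longrightarrow> K $$ (a, b) / c \<in> R"
  shows "det K / c \<in> R"
proof -
  have leibniz_term: "(signof \<sigma> * (\<Prod>i = 0..<m. K $$ (i, \<sigma> i))) / c \<in> R" if \<sigma>: "\<sigma> permutes {0..<m}" for \<sigma>
  proof -
    obtain i where i: "i < n" "\<sigma> i < n" using permutes_some_small_to_small[OF \<sigma> m] by blast
    then have "(\<Prod>j = 0..<m. K $$ (j, \<sigma> j)) = K $$ (i, \<sigma> i) * (\<Prod>j \<in> {0..<m} - {i}. K $$ (j, \<sigma> j))"
      using m by (intro prod.remove) auto
    then have eq: "(signof \<sigma> * (\<Prod>j = 0..<m. K $$ (j, \<sigma> j))) / c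
        = signof \<sigma> * ((K $$ (i, \<sigma> i) / c) * (\<Prod>j \<in> {0..<m} - {i}. K $$ (j, \<sigma> j)))"
      by simp
    have "(\<Prod>j \<in> {0..<m} - {i}. K $$ (j, \<sigma> j)) \<in> R"
      using K permutes_in_image[OF \<sigma>] unfolding mat_over_def by (auto intro!: int_ring_prod)
    then show ?thesis
      unfolding eq by (intro int_ring_mult[OF int_ring_signof] int_ring_mult[OF block[OF i]])
  qed
  have "det K / c = (\<Sum>\<sigma> | \<sigma> permutes {0..<m}. (signof \<sigma> * (\<Prod>i = 0..<m. K $$ (i, \<sigma> i))) / c)"
    unfolding det_def'[OF K(1)] by (simp add: sum_divide_distrib)
  also have "\<dots> \<in> R" by (rule int_ring_sum) (use leibniz_term in blast)
  finally show ?thesis .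
qed

end

lemma join_cols_congruence_index:
  fixes X Y H :: "'a::comm_ring_1 mat"
  assumes X: "X \<in> carrier_mat m n" and Y: "Y \<in> carrier_mat m (m - n)" and H: "H \<in> carrier_mat m m"
    and "n \<le> m" and a: "a < n" and b: "b < n"
  shows "(transpose_mat (join_cols X Y) * H * join_cols X Y) $$ (a, b)
    = (transpose_mat X * H * X) $$ (a, b)"
proof -
  have P: "join_cols X Y \<in> carrier_mat m m" using X Y \<open>n \<le> m\<close> by (auto simp: join_cols_def)
  have "join_cols X Y $$ (i, c) = X $$ (i, c)" if "i < m" "c < n" for i c
    using that X Y unfolding join_cols_def by auto
  moreover have "a < m" "b < m" using a b \<open>n \<le> m\<close> by auto
  ultimately show ?thesis
    unfolding index_transpose_mult_mult[OF P H P \<open>a < m\<close> \<open>b < m\<close>] index_transpose_mult_mult[OF X H X a b]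
    using a b by simp
qed

lemma det_congruence:
  fixes P H :: "'a::comm_ring_1 mat"
  assumes "P \<in> carrier_mat m m" "H \<in> carrier_mat m m"
  shows "det (transpose_mat P * H * P) = det P * det P * det H"
  using assms by (simp add: det_mult[of _ m] det_transpose)

lemma (in valued_field) lattice_gram_scalar: "c \<in> R \<Longrightarrow> c \<noteq> 0 \<Longrightarrow> lattice_gram R n (c \<cdot>\<^sub>m 1\<^sub>m n)"
  unfolding lattice_gram_def mat_over_def by auto

context dyadic_valued_field
begin

lemma prim_n_universal_rank_ge:
  assumes H: "H \<in> carrier_mat m m" and universal: "prim_n_universal R n H"
  shows "2 * n \<le> m"
proof (rule ccontr)
  assume "\<not> 2 * n \<le> m"
  then have m: "m < 2 * n" by simp
  have "det H \<noteq> 0" "mat_over R H"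
    using universal H unfolding prim_n_universal_def lattice_gram_def by auto
  define c where "c = 2 * det H"
  have c: "c \<in> R" "c \<noteq> 0" unfolding c_def using det_in_int_ring[OF \<open>mat_over R H\<close>] \<open>det H \<noteq> 0\<close> by auto
  obtain X where "prim_represents R H (c \<cdot>\<^sub>m 1\<^sub>m n) X"
    using universal lattice_gram_scalar[OF c] unfolding prim_n_universal_def by blast
  then obtain Y u where X: "X \<in> carrier_mat m n" "mat_over R X" "transpose_mat X * H * X = c \<cdot>\<^sub>m 1\<^sub>m n"
    and Y: "Y \<in> carrier_mat m (m - n)" "mat_over R Y" and u: "u \<in> R" "det (join_cols X Y) * u = 1"
    using H unfolding prim_represents_def represents_def by auto
  have "n \<le> m" using join_cols_det_nonzero_imp_le[OF X(1) Y(1)] u(2) by force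
  define P where "P = join_cols X Y"
  have P: "P \<in> carrier_mat m m" "mat_over R P"
    using X Y \<open>n \<le> m\<close> unfolding P_def join_cols_def mat_over_def by auto
  define K where "K = transpose_mat P * H * P"
  have K: "K \<in> carrier_mat m m" "mat_over R K"
    unfolding K_def using P H mat_over_congruence[OF \<open>mat_over R H\<close> P(2) H P(1)] by simp_all
  have "K $$ (a, b) / c \<in> R" if "a < n" "b < n" for a b
    using join_cols_congruence_index[OF X(1) Y(1) H \<open>n \<le> m\<close> that] X(3) c(2) that
    unfolding K_def P_def by simp
  then have "det K / c \<in> R" by (rule det_divisible_if_block_divisible[OF K \<open>n \<le> m\<close> m])
  then have "det K / c * (u * u) \<in> R" using u(1) by (intro int_ring_mult)
  moreover have "det K * (u * u) = det H * ((det P * u) * (det P * u))"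
    unfolding K_def det_congruence[OF P(1) H] by (simp add: algebra_simps)
  then have "det H / c = det K / c * (u * u)" using u(2) unfolding P_def by simp
  ultimately have "det H / c \<in> R" by (simp only:)
  moreover have "det H / c = 1 / 2" unfolding c_def using \<open>det H \<noteq> 0\<close> by simp
  ultimately show False using half_notin_int_ring by simp
qed

lemma prim_n_universal_univ_lattice:
  assumes "finite_residue_field v" and "c0 \<in> R" "c0 / 2 \<notin> R" "(c0 - 1) / 2 \<notin> R" and "2 \<le> l"
  shows "prim_n_universal R (l + 1) (univ_lattice l)"
  unfolding prim_n_universal_def
  using univ_lattice_gram[of l] prim_repr_univ_lattice[OF assms(1-4) _ _ _ assms(5)]
  by (auto simp: lattice_gram_def prim_repr_def)

lemma u_star_eq_if_prim_n_universal:
  assumes "H \<in> carrier_mat (2 * n) (2 * n)" "prim_n_universal R n H"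
  shows "u_star R n = 2 * n"
  unfolding u_star_def using assms prim_n_universal_rank_ge by (intro Least_equality) auto

end

theorem theorem5p3:
  fixes v :: "'a::field \<Rightarrow> int"
  assumes "nonarch_local_field v"
    and "(2::'a) \<noteq> 0"
    and "prime_elem_in (int_ring v) 2"
    and "\<not> ring_iso_Z2 (int_ring v)"
  shows "(\<forall>n::nat. n \<ge> 3 \<longrightarrow>
            prim_n_universal (int_ring v) n (orth_sum (hyp_pow (n - 1)) (diag_lattice [1, -1]))) \<and>
         (\<forall>n::nat. n \<ge> 3 \<longrightarrow> u_star (int_ring v) n = 2 * n)"
proof -
  have "discrete_valuation v" and complete: "v_complete v" and finite_residues: "finite_residue_field v"
    using assms(1) unfolding nonarch_local_field_def by auto
  then interpret dyadic_valued_field v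
    using assms(2,3) by unfold_locales
  obtain c0 where c0: "c0 \<in> R" "c0 / 2 \<notin> R" "(c0 - 1) / 2 \<notin> R"
    using exists_unit_not_one_mod_two[OF complete assms(4)] by blast
  have "prim_n_universal R n (univ_lattice (n - 1))" if "n \<ge> 3" for n
    using prim_n_universal_univ_lattice[OF finite_residues c0, of "n - 1"] that by simp
  moreover have "univ_lattice (n - 1) \<in> carrier_mat (2 * n) (2 * n)" if "n \<ge> 3" for n
    using that by (intro carrier_matI) simp_all
  ultimately show ?thesis
    unfolding univ_lattice_def[symmetric] using u_star_eq_if_prim_n_universal by blast
qed

end
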